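(* Let $\mathbb{U}$ be a compact Lie group and $\mathcal{A}\to X$ a real or complex locally trivial algebra bundle$_{\mathbb{U}}$ with finite-dimensional semisimple fibers over a paracompact Hausdorff base $X$. (1) There is a $\mathbb{U}$-invariant continuous section $e\in\Gamma(\mathcal{A}^{\otimes 2})$ such that for each $x\in X$, $e(x)\in\mathcal{A}_x\otimes\mathcal{A}_x$ is a separability idempotent of $\mathcal{A}_x$. (2) If moreover $\mathcal{A}$ is a bundle of $*$-algebras (with $\mathbb{U}$ acting by $*$-automorphisms), then $e$ as in (1) can be chosen so that additionally $e^*=\sigma(e)$, where $\sigma$ is the tensor flip $a\otimes b\mapsto b\otimes a$ and $(a\otimes b)^*:=a^*\otimes b^*$.
   Context: A separability idempotent of a finite-dimensional algebra $A$ is an element $e=\sum_k a_k\otimes b_k\in A\otimes A$ with $me=em$ for all $m\in A$ (using the $A$-bimodule structure $m(a\otimes b)=ma\otimes b$, $(a\otimes b)m=a\otimes bm$) and $\sum_k a_kb_k=1$. A locally trivial algebra bundle$_{\mathbb{U}}$ is a locally trivial bundle of finite-dimensional (unital) algebras, locally isomorphic to $U\times A$ for a fixed algebra $A$, with continuous $\mathbb{U}$-actions on total space and base making the projection equivariant and acting by algebra isomorphisms between fibers; $\mathcal{A}^{\otimes2}$ is the fiberwise tensor-square bundle with the induced $\mathbb{U}$-action. $\mathbb{U}$-invariance of $e$ means $\gamma\cdot e(x)=e(\gamma x)$. *)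

theory Defs
  imports "HOL-Analysis.Analysis"
begin

definition paracompact_space :: "'x topology \<Rightarrow> bool" where
  "paracompact_space X \<longleftrightarrow>
     (\<forall>\<U>. (\<forall>U\<in>\<U>. openin X U) \<and> topspace X \<subseteq> \<Union>\<U> \<longrightarrow>
        (\<exists>\<V>. (\<forall>V\<in>\<V>. openin X V) \<and> topspace X \<subseteq> \<Union>\<V> \<and>
              (\<forall>V\<in>\<V>. \<exists>U\<in>\<U>. V \<subseteq> U) \<and> locally_finite_in X \<V>))"

record 'g tgroup =
  gtop :: "'g topology"
  gmul :: "'g \<Rightarrow> 'g \<Rightarrow> 'g"
  ginv :: "'g \<Rightarrow> 'g"
  gone :: "'g"

definition topological_group :: "'g tgroup \<Rightarrow> bool" where
  "topological_group G \<longleftrightarrow>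
     gone G \<in> topspace (gtop G) \<and>
     (\<forall>a\<in>topspace (gtop G). \<forall>b\<in>topspace (gtop G). gmul G a b \<in> topspace (gtop G)) \<and>
     (\<forall>a\<in>topspace (gtop G). ginv G a \<in> topspace (gtop G)) \<and>
     (\<forall>a\<in>topspace (gtop G). \<forall>b\<in>topspace (gtop G). \<forall>c\<in>topspace (gtop G).
        gmul G (gmul G a b) c = gmul G a (gmul G b c)) \<and>
     (\<forall>a\<in>topspace (gtop G). gmul G (gone G) a = a \<and> gmul G a (gone G) = a) \<and>
     (\<forall>a\<in>topspace (gtop G). gmul G (ginv G a) a = gone G \<and> gmul G a (ginv G a) = gone G) \<and>
     continuous_map (prod_topology (gtop G) (gtop G)) (gtop G) (\<lambda>(a, b). gmul G a b) \<and>
     continuous_map (gtop G) (gtop G) (ginv G)"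

definition locally_euclidean :: "'g topology \<Rightarrow> bool" where
  "locally_euclidean T \<longleftrightarrow>
     (\<forall>g\<in>topspace T. \<exists>W n. openin T W \<and> g \<in> W \<and> subtopology T W homeomorphic_space Euclidean_space n)"

text \<open>A compact Lie group, rendered as a compact Hausdorff topological group that is a
  topological manifold.\<close>
definition compact_Lie_group :: "'g tgroup \<Rightarrow> bool" where
  "compact_Lie_group G \<longleftrightarrow>
     topological_group G \<and> Hausdorff_space (gtop G) \<and> compact_space (gtop G) \<and>
     locally_euclidean (gtop G)"

text \<open>The typical fibre is the algebra ('k^'n, tmul, tone); the fibre algebra operations
  on the total space are badd, bzero, bsmult, bmul, bone (bzero x, bone x lie in the fibre over x).\<close>
record ('g, 'x, 'e, 'k, 'n::finite) algbundle =
  bbase  :: "'x topology"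
  btotal :: "'e topology"
  bproj  :: "'e \<Rightarrow> 'x"
  badd   :: "'e \<Rightarrow> 'e \<Rightarrow> 'e"
  bzero  :: "'x \<Rightarrow> 'e"
  bsmult :: "'k \<Rightarrow> 'e \<Rightarrow> 'e"
  bmul   :: "'e \<Rightarrow> 'e \<Rightarrow> 'e"
  bone   :: "'x \<Rightarrow> 'e"
  tmul   :: "'k^'n \<Rightarrow> 'k^'n \<Rightarrow> 'k^'n"
  tone   :: "'k^'n"
  bactX  :: "'g \<Rightarrow> 'x \<Rightarrow> 'x"
  bactE  :: "'g \<Rightarrow> 'e \<Rightarrow> 'e"

definition fiberE :: "('g, 'x, 'e, 'k, 'n::finite) algbundle \<Rightarrow> 'x \<Rightarrow> 'e set" where
  "fiberE B x = {v \<in> topspace (btotal B). bproj B v = x}"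

definition typical_alg :: "('k::real_normed_field^'n \<Rightarrow> 'k^'n \<Rightarrow> 'k^'n) \<Rightarrow> 'k^'n \<Rightarrow> bool" where
  "typical_alg m u \<longleftrightarrow>
     (\<forall>a b c. m (a + b) c = m a c + m b c \<and> m a (b + c) = m a b + m a c) \<and>
     (\<forall>(s::'k) a b. m (s *s a) b = s *s m a b \<and> m a (s *s b) = s *s m a b) \<and>
     (\<forall>a b c. m (m a b) c = m a (m b c)) \<and>
     (\<forall>a. m u a = a \<and> m a u = a)"

definition local_triv ::
  "('g, 'x, 'e, 'k::real_normed_field, 'n::finite) algbundle \<Rightarrow> 'x set \<Rightarrow> ('e \<Rightarrow> 'k^'n) \<Rightarrow> bool" where
  "local_triv B W \<phi> \<longleftrightarrow>
     openin (bbase B) W \<and>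
     homeomorphic_map (subtopology (btotal B) {v \<in> topspace (btotal B). bproj B v \<in> W})
                      (prod_topology (subtopology (bbase B) W) euclidean)
                      (\<lambda>v. (bproj B v, \<phi> v)) \<and>
     (\<forall>x\<in>W. bzero B x \<in> fiberE B x \<and> \<phi> (bzero B x) = 0 \<and>
             bone B x \<in> fiberE B x \<and> \<phi> (bone B x) = tone B \<and>
       (\<forall>a\<in>fiberE B x. \<forall>b\<in>fiberE B x. \<forall>c.
          badd B a b \<in> fiberE B x \<and> \<phi> (badd B a b) = \<phi> a + \<phi> b \<and>
          bsmult B c a \<in> fiberE B x \<and> \<phi> (bsmult B c a) = c *s \<phi> a \<and>
          bmul B a b \<in> fiberE B x \<and> \<phi> (bmul B a b) = tmul B (\<phi> a) (\<phi> b)))"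

definition loc_triv_alg_bundle :: "('g, 'x, 'e, 'k::real_normed_field, 'n::finite) algbundle \<Rightarrow> bool" where
  "loc_triv_alg_bundle B \<longleftrightarrow>
     typical_alg (tmul B) (tone B) \<and>
     continuous_map (btotal B) (bbase B) (bproj B) \<and>
     (\<forall>x\<in>topspace (bbase B). \<exists>W \<phi>. x \<in> W \<and> local_triv B W \<phi>)"

definition bundle_action :: "'g tgroup \<Rightarrow> ('g, 'x, 'e, 'k, 'n::finite) algbundle \<Rightarrow> bool" where
  "bundle_action G B \<longleftrightarrow>
     (\<forall>g\<in>topspace (gtop G). \<forall>x\<in>topspace (bbase B). bactX B g x \<in> topspace (bbase B)) \<and>
     (\<forall>x\<in>topspace (bbase B). bactX B (gone G) x = x) \<and>
     (\<forall>g\<in>topspace (gtop G). \<forall>h\<in>topspace (gtop G). \<forall>x\<in>topspace (bbase B).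
        bactX B (gmul G g h) x = bactX B g (bactX B h x)) \<and>
     (\<forall>g\<in>topspace (gtop G). \<forall>v\<in>topspace (btotal B). bactE B g v \<in> topspace (btotal B)) \<and>
     (\<forall>v\<in>topspace (btotal B). bactE B (gone G) v = v) \<and>
     (\<forall>g\<in>topspace (gtop G). \<forall>h\<in>topspace (gtop G). \<forall>v\<in>topspace (btotal B).
        bactE B (gmul G g h) v = bactE B g (bactE B h v)) \<and>
     continuous_map (prod_topology (gtop G) (bbase B)) (bbase B) (\<lambda>(g, x). bactX B g x) \<and>
     continuous_map (prod_topology (gtop G) (btotal B)) (btotal B) (\<lambda>(g, v). bactE B g v) \<and>
     (\<forall>g\<in>topspace (gtop G). \<forall>v\<in>topspace (btotal B). bproj B (bactE B g v) = bactX B g (bproj B v)) \<and>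
     (\<forall>g\<in>topspace (gtop G). \<forall>x\<in>topspace (bbase B).
        bactE B g (bone B x) = bone B (bactX B g x) \<and>
        (\<forall>a\<in>fiberE B x. \<forall>b\<in>fiberE B x. \<forall>c.
           bactE B g (badd B a b) = badd B (bactE B g a) (bactE B g b) \<and>
           bactE B g (bsmult B c a) = bsmult B c (bactE B g a) \<and>
           bactE B g (bmul B a b) = bmul B (bactE B g a) (bactE B g b)))"

definition alg_bundle_U :: "'g tgroup \<Rightarrow> ('g, 'x, 'e, 'k::real_normed_field, 'n::finite) algbundle \<Rightarrow> bool" where
  "alg_bundle_U G B \<longleftrightarrow> loc_triv_alg_bundle B \<and> bundle_action G B"

definition fib_ideal :: "('g, 'x, 'e, 'k, 'n::finite) algbundle \<Rightarrow> 'x \<Rightarrow> 'e set \<Rightarrow> bool" where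
  "fib_ideal B x I \<longleftrightarrow>
     I \<subseteq> fiberE B x \<and> bzero B x \<in> I \<and>
     (\<forall>a\<in>I. \<forall>b\<in>I. badd B a b \<in> I) \<and> (\<forall>c. \<forall>a\<in>I. bsmult B c a \<in> I) \<and>
     (\<forall>s\<in>fiberE B x. \<forall>a\<in>I. bmul B s a \<in> I \<and> bmul B a s \<in> I)"

definition fib_nilpotent :: "('g, 'x, 'e, 'k, 'n::finite) algbundle \<Rightarrow> 'x \<Rightarrow> 'e set \<Rightarrow> bool" where
  "fib_nilpotent B x I \<longleftrightarrow>
     (\<exists>k\<ge>1. \<forall>as. length as = k \<and> set as \<subseteq> I \<longrightarrow> foldr (bmul B) as (bone B x) = bzero B x)"

text \<open>A finite-dimensional algebra is semisimple iff it has no nonzero nilpotent two-sided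
  ideal (equivalently, its Jacobson radical vanishes).\<close>
definition semisimple_fibers :: "('g, 'x, 'e, 'k, 'n::finite) algbundle \<Rightarrow> bool" where
  "semisimple_fibers B \<longleftrightarrow>
     (\<forall>x\<in>topspace (bbase B). \<forall>I. fib_ideal B x I \<and> fib_nilpotent B x I \<longrightarrow> I = {bzero B x})"

text \<open>A tensor sum_k a_k \<otimes> b_k in a fibre is represented by the list of pairs (a_k, b_k);
  under a local trivialization phi its coordinates in 'k^'n \<otimes> 'k^'n = 'k^'n^'n are
  sum_k phi(a_k) phi(b_k)^T.\<close>
definition outer :: "'k::real_normed_field^'n \<Rightarrow> 'k^'n \<Rightarrow> 'k^'n^'n" where
  "outer u v = (\<chi> i j. u $ i * v $ j)"

definition tcoord :: "('e \<Rightarrow> 'k::real_normed_field^'n) \<Rightarrow> ('e \<times> 'e) list \<Rightarrow> 'k^'n^'n" where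
  "tcoord \<phi> l = sum_list (map (\<lambda>(a, b). outer (\<phi> a) (\<phi> b)) l)"

definition tensor_in :: "('g, 'x, 'e, 'k, 'n::finite) algbundle \<Rightarrow> 'x \<Rightarrow> ('e \<times> 'e) list \<Rightarrow> bool" where
  "tensor_in B x l \<longleftrightarrow> (\<forall>(a, b)\<in>set l. a \<in> fiberE B x \<and> b \<in> fiberE B x)"

definition teq :: "('g, 'x, 'e, 'k::real_normed_field, 'n::finite) algbundle \<Rightarrow> 'x \<Rightarrow> ('e \<times> 'e) list \<Rightarrow> ('e \<times> 'e) list \<Rightarrow> bool" where
  "teq B x l1 l2 \<longleftrightarrow> (\<forall>W \<phi>. local_triv B W \<phi> \<and> x \<in> W \<longrightarrow> tcoord \<phi> l1 = tcoord \<phi> l2)"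

definition fsum :: "('g, 'x, 'e, 'k, 'n::finite) algbundle \<Rightarrow> 'x \<Rightarrow> 'e list \<Rightarrow> 'e" where
  "fsum B x l = foldr (badd B) l (bzero B x)"

definition sep_idempotent :: "('g, 'x, 'e, 'k::real_normed_field, 'n::finite) algbundle \<Rightarrow> 'x \<Rightarrow> ('e \<times> 'e) list \<Rightarrow> bool" where
  "sep_idempotent B x l \<longleftrightarrow>
     tensor_in B x l \<and>
     (\<forall>m\<in>fiberE B x. teq B x (map (\<lambda>(a, b). (bmul B m a, b)) l) (map (\<lambda>(a, b). (a, bmul B b m)) l)) \<and>
     fsum B x (map (\<lambda>(a, b). bmul B a b) l) = bone B x"

definition cont_tensor_section :: "('g, 'x, 'e, 'k::real_normed_field, 'n::finite) algbundle \<Rightarrow> ('x \<Rightarrow> ('e \<times> 'e) list) \<Rightarrow> bool" where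
  "cont_tensor_section B e \<longleftrightarrow>
     (\<forall>W \<phi>. local_triv B W \<phi> \<longrightarrow> continuous_map (subtopology (bbase B) W) euclidean (\<lambda>x. tcoord \<phi> (e x)))"

definition invariant_tensor_section :: "'g tgroup \<Rightarrow> ('g, 'x, 'e, 'k::real_normed_field, 'n::finite) algbundle \<Rightarrow> ('x \<Rightarrow> ('e \<times> 'e) list) \<Rightarrow> bool" where
  "invariant_tensor_section G B e \<longleftrightarrow>
     (\<forall>g\<in>topspace (gtop G). \<forall>x\<in>topspace (bbase B).
        teq B (bactX B g x) (map (\<lambda>(a, b). (bactE B g a, bactE B g b)) (e x)) (e (bactX B g x)))"

definition sep_section :: "'g tgroup \<Rightarrow> ('g, 'x, 'e, 'k::real_normed_field, 'n::finite) algbundle \<Rightarrow> ('x \<Rightarrow> ('e \<times> 'e) list) \<Rightarrow> bool" where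
  "sep_section G B e \<longleftrightarrow>
     cont_tensor_section B e \<and> invariant_tensor_section G B e \<and>
     (\<forall>x\<in>topspace (bbase B). sep_idempotent B x (e x))"

definition star_bundle_U :: "('k \<Rightarrow> 'k) \<Rightarrow> 'g tgroup \<Rightarrow> ('g, 'x, 'e, 'k, 'n::finite) algbundle \<Rightarrow> ('e \<Rightarrow> 'e) \<Rightarrow> bool" where
  "star_bundle_U cj G B st \<longleftrightarrow>
     continuous_map (btotal B) (btotal B) st \<and>
     (\<forall>x\<in>topspace (bbase B). \<forall>a\<in>fiberE B x. \<forall>b\<in>fiberE B x. \<forall>c.
        st a \<in> fiberE B x \<and> st (st a) = a \<and>
        st (badd B a b) = badd B (st a) (st b) \<and>
        st (bsmult B c a) = bsmult B (cj c) (st a) \<and>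
        st (bmul B a b) = bmul B (st b) (st a)) \<and>
     (\<forall>g\<in>topspace (gtop G). \<forall>v\<in>topspace (btotal B). bactE B g (st v) = st (bactE B g v))"

definition star_flip_section :: "('g, 'x, 'e, 'k::real_normed_field, 'n::finite) algbundle \<Rightarrow> ('e \<Rightarrow> 'e) \<Rightarrow> ('x \<Rightarrow> ('e \<times> 'e) list) \<Rightarrow> bool" where
  "star_flip_section B st e \<longleftrightarrow>
     (\<forall>x\<in>topspace (bbase B). teq B x (map (\<lambda>(a, b). (st a, st b)) (e x)) (map (\<lambda>(a, b). (b, a)) (e x)))"

end

theory Submission
  imports Defs
begin

text \<open>Over a field of characteristic zero a finite-dimensional algebra \<open>A\<close> is semisimple exactly
  when its trace form \<open>(a, b) \<mapsto> tr (L\<^sub>a\<^sub>b)\<close> is nondegenerate: the radical of the form is an ideal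
  in which every idempotent has trace zero and hence vanishes; this makes the radical nil, hence
  nilpotent by Wedderburn's theorem.
  If \<open>G\<close> is the Gram matrix of the trace form in a basis \<open>e\<^sub>k\<close>, the Casimir element
  \<open>e = \<Sum>\<^sub>k\<^sub>l (G\<^sup>-\<^sup>1)\<^sub>k\<^sub>l e\<^sub>k \<otimes> e\<^sub>l\<close> satisfies \<open>m e = e m\<close> and multiplies to \<open>1\<close>. A conjugate-linear
  automorphism or anti-automorphism of \<open>A\<close> preserves the trace form up to conjugation, so it maps
  \<open>e\<close> to itself; as the trace form is symmetric, \<open>e\<close> is also flip-invariant.

  Transport the Casimir element of the typical fibre to every fibre. Transition maps are
  automorphisms of the typical fibre, so in every local trivialization the section has the
  constant coordinates \<open>G\<^sup>-\<^sup>1\<close>: it is continuous, invariant under any action by algebra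
  automorphisms, and \<open>e\<^sup>* = e = \<sigma>(e)\<close> for a bundle of \<open>*\<close>-algebras.\<close>

section \<open>Subspaces and traces\<close>

lemma vec_linearI:
  fixes f :: "'k::field^'n \<Rightarrow> 'k^'m"
  assumes "\<And>x y. f (x + y) = f x + f y" "\<And>c x. f (c *s x) = c *s f x"
  shows "Vector_Spaces.linear (*s) (*s) f"
  using assms by (simp add: Vector_Spaces.linear_iff vec.vector_space_axioms)

lemma trace_matrix_idempotent:
  fixes P :: "'k::field^'n \<Rightarrow> 'k^'n"
  assumes lin: "Vector_Spaces.linear (*s) (*s) P" and idem: "\<And>x. P (P x) = P x"
  shows "trace (matrix P) = of_nat (vec.dim (range P))"
proof -
  interpret P: Vector_Spaces.linear "(*s)" "(*s)" P using lin .
  obtain S where S: "S \<subseteq> range P" "vec.independent S" "range P \<subseteq> vec.span S" "card S = vec.dim (range P)"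
    using vec.basis_exists by blast
  have fin: "finite S" using S(2) vec.finiteI_independent by auto
  let ?r = "vec.representation S"
  have in_span: "P x \<in> vec.span S" for x using S(3) by auto
  have P_expand: "P x = (\<Sum>b\<in>S. ?r (P x) b *s b)" for x
    using vec.sum_representation_eq[OF S(2) in_span fin subset_refl] by simp
  have "trace (matrix P) = (\<Sum>j\<in>UNIV. P (axis j 1) $ j)" by (simp add: trace_def matrix_def)
  also have "\<dots> = (\<Sum>j\<in>UNIV. \<Sum>b\<in>S. ?r (P (axis j 1)) b * b $ j)"
    by (rule sum.cong[OF refl], subst P_expand) simp
  also have "\<dots> = (\<Sum>b\<in>S. \<Sum>j\<in>UNIV. b $ j * ?r (P (axis j 1)) b)"
    by (subst sum.swap) (simp add: mult.commute)
  also have "\<dots> = (\<Sum>b\<in>S. 1)"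
  proof (rule sum.cong[OF refl])
    fix b assume b: "b \<in> S"
    have "P b = (\<Sum>j\<in>UNIV. b $ j *s P (axis j 1))"
      by (subst basis_expansion[symmetric]) (simp add: P.sum P.scale)
    then have "?r (P b) b = (\<Sum>j\<in>UNIV. ?r (b $ j *s P (axis j 1)) b)"
      using vec.representation_sum[OF S(2), of UNIV "\<lambda>j. b $ j *s P (axis j 1)"]
      by (simp add: vec.span_scale in_span)
    also have "\<dots> = (\<Sum>j\<in>UNIV. b $ j * ?r (P (axis j 1)) b)"
      by (simp add: vec.representation_scale[OF S(2) in_span])
    finally have "?r (P b) b = (\<Sum>j\<in>UNIV. b $ j * ?r (P (axis j 1)) b)" .
    moreover have "P b = b" using S(1) b idem by auto
    then have "?r (P b) b = 1" using vec.representation_basis[OF S(2) b] by simp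
    ultimately show "(\<Sum>j\<in>UNIV. b $ j * ?r (P (axis j 1)) b) = 1" by simp
  qed
  finally show ?thesis using S(4) by simp
qed

lemma idempotent_eq_zero_if_trace_zero:
  fixes P :: "'k::field_char_0^'n \<Rightarrow> 'k^'n"
  assumes "Vector_Spaces.linear (*s) (*s) P" "\<And>x. P (P x) = P x" "trace (matrix P) = 0"
  shows "P x = 0"
proof -
  have "vec.dim (range P) = 0" using trace_matrix_idempotent[of P, OF assms(1,2)] assms(3) by simp
  then show ?thesis by auto
qed

lemma decreasing_subspaces_stabilise:
  fixes S :: "nat \<Rightarrow> ('k::field^'n) set"
  assumes sub: "\<And>i. vec.subspace (S i)" and dec: "\<And>i. S (Suc i) \<subseteq> S i"
  obtains N where "S (Suc N) = S N"
proof -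
  have "\<exists>N. S (Suc N) = S N"
  proof (rule ccontr)
    assume "\<nexists>N. S (Suc N) = S N"
    then have "vec.span (S (Suc i)) \<subset> vec.span (S i)" for i
      using sub[of i] sub[of "Suc i"] dec[of i] by (metis psubsetI vec.span_eq_iff)
    then have dim_less: "vec.dim (S (Suc i)) < vec.dim (S i)" for i
      by (rule vec.dim_psubset)
    have "vec.dim (S i) + i \<le> vec.dim (S 0)" for i
    proof (induction i)
      case (Suc i) then show ?case using dim_less[of i] by simp
    qed simp
    from this[of "Suc (vec.dim (S 0))"] show False by simp
  qed
  then show thesis using that by blast
qed

lemma exists_maximal_subspace:
  fixes P :: "('k::field^'n) set \<Rightarrow> bool"
  assumes "P W0" and sub: "\<And>W. P W \<Longrightarrow> vec.subspace W"
  obtains W where "P W" "\<And>W'. P W' \<Longrightarrow> W \<subseteq> W' \<Longrightarrow> W' = W"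
proof -
  have bounded: "\<forall>d. (\<exists>W. P W \<and> vec.dim W = d) \<longrightarrow> d \<le> CARD('n)"
    using vec.dim_subset[of _ UNIV] vec_dim_card by (metis subset_UNIV)
  obtain W where W: "P W" and max: "\<And>W'. P W' \<Longrightarrow> vec.dim W' \<le> vec.dim W"
    using Nat.ex_has_greatest_nat[OF _ bounded] \<open>P W0\<close> by blast
  show thesis
  proof (rule that[OF W])
    fix W' assume "P W'" "W \<subseteq> W'"
    then show "W' = W" using vec.subspace_dim_equal[of W W'] sub W max by auto
  qed
qed

section \<open>Semilinear maps\<close>

definition field_involution :: "('k::field \<Rightarrow> 'k) \<Rightarrow> bool" where
  "field_involution cj \<longleftrightarrow> (\<forall>a b. cj (a + b) = cj a + cj b) \<and> (\<forall>a b. cj (a * b) = cj a * cj b) \<and>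
     (\<forall>a. cj (cj a) = a) \<and> cj 1 = 1"

lemma field_involution_id: "field_involution (\<lambda>x. x)"
  by (simp add: field_involution_def)

lemma field_involution_cnj: "field_involution cnj"
  by (simp add: field_involution_def)

definition map_vector :: "('k \<Rightarrow> 'k) \<Rightarrow> 'k^'n \<Rightarrow> 'k^'n" where
  "map_vector f v = (\<chi> i. f (v $ i))"

lemma map_matrix_ident[simp]: "map_matrix (\<lambda>x. x) M = M"
  by (simp add: vec_eq_iff)

context
  fixes cj :: "'k::field \<Rightarrow> 'k"
  assumes cj: "field_involution cj"
begin

lemma involution_add: "cj (a + b) = cj a + cj b"
  and involution_mult: "cj (a * b) = cj a * cj b"
  and involution_involutive[simp]: "cj (cj a) = a"
  using cj unfolding field_involution_def by auto

lemma involution_zero[simp]: "cj 0 = 0"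
  using involution_add[of 0 0] by (metis add.right_neutral add_left_cancel)

lemma involution_sum: "cj (sum f S) = (\<Sum>i\<in>S. cj (f i))"
  by (induction S rule: infinite_finite_induct) (simp_all add: involution_add)

lemma map_vector_involutive[simp]: "map_vector cj (map_vector cj v) = v"
  by (simp add: map_vector_def vec_eq_iff)

lemma map_vector_matrix_vector_mult: "map_vector cj (M *v v) = map_matrix cj M *v map_vector cj v"
  by (simp add: map_vector_def matrix_vector_mult_def involution_sum involution_mult vec_eq_iff)

lemma map_matrix_matrix_mult: "map_matrix cj (X ** Y) = map_matrix cj X ** map_matrix cj Y"
  by (simp add: matrix_matrix_mult_def involution_sum involution_mult vec_eq_iff)

lemma map_matrix_mat_1: "map_matrix cj (mat 1) = mat 1"
  using cj by (simp add: mat_def vec_eq_iff field_involution_def)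

lemma trace_map_matrix: "trace (map_matrix cj M) = cj (trace M)"
  by (simp add: trace_def involution_sum)

context
  fixes g :: "'k^'n \<Rightarrow> 'k^'n"
  assumes add: "\<And>x y. g (x + y) = g x + g y" and scale: "\<And>c x. g (c *s x) = cj c *s g x"
begin

lemma semilinear_eq_matrix: "g v = matrix g *v map_vector cj v"
proof -
  have g_sum: "g (sum f S) = (\<Sum>i\<in>S. g (f i))" for f :: "'n \<Rightarrow> _" and S
    by (induction S rule: infinite_finite_induct) (simp_all add: add add[of 0 0, simplified])
  have "g v = g (\<Sum>j\<in>UNIV. v $ j *s axis j 1)" by (simp add: basis_expansion)
  also have "\<dots> = (\<Sum>j\<in>UNIV. cj (v $ j) *s g (axis j 1))" by (simp add: g_sum scale)
  also have "\<dots> = matrix g *v map_vector cj v"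
    by (simp add: vec_eq_iff matrix_vector_mult_def matrix_def map_vector_def mult.commute)
  finally show ?thesis .
qed

lemma matrix_semilinear_mult: "matrix g *v w = g (map_vector cj w)"
  using semilinear_eq_matrix[of "map_vector cj w"] by simp

lemma invertible_matrix_semilinear:
  assumes "inj g"
  shows "invertible (matrix g)"
  unfolding invertible_left_inverse matrix_left_invertible_ker
proof (intro allI impI)
  fix x assume "matrix g *v x = 0"
  then have "g (map_vector cj x) = g 0"
    using semilinear_eq_matrix[of "map_vector cj x"] add[of 0 0] by simp
  then have "map_vector cj x = 0" using assms by (simp add: inj_eq)
  then show "x = 0" using map_vector_involutive[of x] by (simp add: map_vector_def vec_eq_iff)
qed

end

end

section \<open>The trace form of a finite-dimensional algebra\<close>

locale fd_algebra =
  fixes m :: "'k::real_normed_field^'n::finite \<Rightarrow> 'k^'n \<Rightarrow> 'k^'n" and one :: "'k^'n"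
  assumes typical_alg: "typical_alg m one"
begin

lemma mult_add_left: "m (a + b) c = m a c + m b c"
  and mult_add_right: "m a (b + c) = m a b + m a c"
  and mult_scale_left: "m (s *s a) b = s *s m a b"
  and mult_scale_right: "m a (s *s b) = s *s m a b"
  and mult_assoc: "m (m a b) c = m a (m b c)"
  and mult_one_left[simp]: "m one a = a"
  and mult_one_right[simp]: "m a one = a"
  using typical_alg unfolding typical_alg_def by blast+

lemma linear_left_mult: "Vector_Spaces.linear (*s) (*s) (m a)"
  by (rule vec_linearI) (simp_all add: mult_add_right mult_scale_right)

lemma linear_right_mult: "Vector_Spaces.linear (*s) (*s) (\<lambda>x. m x b)"
  by (rule vec_linearI) (simp_all add: mult_add_left mult_scale_left)

lemma mult_zero_left[simp]: "m 0 b = 0"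
  using mult_scale_left[of 0 0 b] by simp

lemma mult_zero_right[simp]: "m a 0 = 0"
  using mult_scale_right[of a 0 0] by simp

lemma mult_diff_right: "m a (b - c) = m a b - m a c"
  using mult_add_right[of a "b - c" c] by (simp add: eq_diff_eq)

lemma mult_sum_left: "m (sum f S) b = (\<Sum>i\<in>S. m (f i) b)"
  by (induction S rule: infinite_finite_induct) (simp_all add: mult_add_left)

lemma mult_sum_right: "m a (sum f S) = (\<Sum>i\<in>S. m a (f i))"
  by (induction S rule: infinite_finite_induct) (simp_all add: mult_add_right)

definition lmat :: "'k^'n \<Rightarrow> 'k^'n^'n" where "lmat a = matrix (m a)"
definition rmat :: "'k^'n \<Rightarrow> 'k^'n^'n" where "rmat a = matrix (\<lambda>x. m x a)"
definition ltrace :: "'k^'n \<Rightarrow> 'k" where "ltrace a = trace (lmat a)"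
definition tform :: "'k^'n \<Rightarrow> 'k^'n \<Rightarrow> 'k" where "tform a b = ltrace (m a b)"

lemma lmat_mult_vector: "lmat a *v x = m a x"
  by (simp add: lmat_def matrix_works[OF linear_left_mult])

lemma rmat_mult_vector: "rmat a *v x = m x a"
  by (simp add: rmat_def matrix_works[OF linear_right_mult])

lemma lmat_mult: "lmat (m a b) = lmat a ** lmat b"
proof -
  have "m (m a b) = m a o m b" by (auto simp: mult_assoc)
  then show ?thesis by (simp add: lmat_def matrix_compose_gen[OF linear_left_mult linear_left_mult])
qed

lemma ltrace_eq_sum: "ltrace a = (\<Sum>j\<in>UNIV. m a (axis j 1) $ j)"
  by (simp add: ltrace_def lmat_def trace_def matrix_def)

lemma ltrace_add: "ltrace (a + b) = ltrace a + ltrace b"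
  by (simp add: ltrace_eq_sum mult_add_left sum.distrib)

lemma ltrace_scale: "ltrace (c *s a) = c * ltrace a"
  by (simp add: ltrace_eq_sum mult_scale_left sum_distrib_left)

lemma ltrace_zero[simp]: "ltrace 0 = 0"
  by (simp add: ltrace_eq_sum)

lemma ltrace_sum: "ltrace (sum f S) = (\<Sum>i\<in>S. ltrace (f i))"
  by (induction S rule: infinite_finite_induct) (simp_all add: ltrace_add)

lemma ltrace_mult_commute: "ltrace (m a b) = ltrace (m b a)"
  unfolding ltrace_def lmat_mult by (rule trace_mul_sym)

lemma tform_commute: "tform a b = tform b a"
  by (simp add: tform_def ltrace_mult_commute)

lemma tform_mult_left: "tform (m a b) c = tform a (m b c)"
  by (simp add: tform_def mult_assoc)

lemma tform_add_left: "tform (a + b) c = tform a c + tform b c"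
  by (simp add: tform_def mult_add_left ltrace_add)

lemma tform_scale_left: "tform (s *s a) b = s * tform a b"
  by (simp add: tform_def mult_scale_left ltrace_scale)

lemma tform_scale_right: "tform a (s *s b) = s * tform a b"
  by (simp add: tform_def mult_scale_right ltrace_scale)

lemma tform_sum_left: "tform (sum f S) b = (\<Sum>i\<in>S. tform (f i) b)"
  by (simp add: tform_def mult_sum_left ltrace_sum)

lemma tform_sum_right: "tform a (sum f S) = (\<Sum>i\<in>S. tform a (f i))"
  by (simp add: tform_def mult_sum_right ltrace_sum)

lemma tform_one_right: "tform a one = ltrace a"
  by (simp add: tform_def)

lemma tform_diff_right: "tform a (b - c) = tform a b - tform a c"
  using tform_add_left[of "b - c" c a] by (simp add: tform_commute[of a] eq_diff_eq)

lemma tform_expand_left: "tform x y = (\<Sum>k\<in>UNIV. x $ k * tform (axis k 1) y)"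
proof -
  have "tform x y = tform (\<Sum>k\<in>UNIV. x $ k *s axis k 1) y"
    by (simp add: basis_expansion)
  then show ?thesis by (simp add: tform_sum_left tform_scale_left)
qed

lemma tform_expand_right: "tform x y = (\<Sum>l\<in>UNIV. y $ l * tform x (axis l 1))"
  using tform_expand_left[of y x] by (simp add: tform_commute)

primrec mpow :: "'k^'n \<Rightarrow> nat \<Rightarrow> 'k^'n" where
  "mpow a 0 = one" | "mpow a (Suc k) = m a (mpow a k)"

lemma mpow_add: "m (mpow a i) (mpow a j) = mpow a (i + j)"
  by (induction i) (simp_all add: mult_assoc)

lemma mpow_commute:
  assumes "m p q = m q p"
  shows "m (mpow p k) q = m q (mpow p k)"
proof (induction k)
  case (Suc k)
  have "m (m p (mpow p k)) q = m p (m q (mpow p k))" using Suc by (simp add: mult_assoc)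
  also have "\<dots> = m q (m p (mpow p k))" using assms by (simp flip: mult_assoc)
  finally show ?case by simp
qed simp

lemma mpow_mult_commuting: "m p q = m q p \<Longrightarrow> mpow (m p q) k = m (mpow p k) (mpow q k)"
proof (induction k)
  case (Suc k)
  have "m (m p q) (m (mpow p k) (mpow q k)) = m p (m (m q (mpow p k)) (mpow q k))"
    by (simp add: mult_assoc)
  also have "\<dots> = m (m p (mpow p k)) (m q (mpow q k))"
    unfolding mpow_commute[OF Suc.prems, of k, symmetric] by (simp add: mult_assoc)
  finally show ?case using Suc by simp
qed simp

lemma powers_span_commute:
  assumes "q \<in> vec.span (range (mpow a))"
  shows "m a q = m q a"
  using assms
proof (induction rule: vec.span_induct_alt)
  case (step c x y)
  then obtain j where "x = mpow a j" by auto
  then show ?case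
    using step.IH mpow_commute[of a a j]
    by (simp add: mult_add_left mult_add_right mult_scale_left mult_scale_right)
qed simp

definition radical :: "('k^'n) set" where "radical = {a. \<forall>b. tform a b = 0}"

lemma tform_zero_left[simp]: "tform 0 b = 0"
  by (simp add: tform_def)

lemma subspace_radical: "vec.subspace radical"
  by (rule vec.subspaceI) (auto simp: radical_def tform_add_left tform_scale_left)

lemma radical_mult_left:
  assumes "a \<in> radical"
  shows "m s a \<in> radical"
proof -
  have "tform (m s a) b = tform a (m b s)" for b
    using ltrace_mult_commute[of s "m a b"] by (simp add: tform_def mult_assoc)
  then show ?thesis using assms by (simp add: radical_def)
qed

lemma radical_mult_right: "a \<in> radical \<Longrightarrow> m a s \<in> radical"
  by (simp add: radical_def tform_mult_left)

lemma radical_idempotent: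
  assumes "f \<in> radical" "m f f = f"
  shows "f = 0"
proof -
  have "m f x = 0" for x
  proof (rule idempotent_eq_zero_if_trace_zero[OF linear_left_mult])
    show "m f (m f x) = m f x" for x using assms(2) by (simp flip: mult_assoc)
    show "trace (matrix (m f)) = 0"
      using assms(1) tform_one_right[of f] by (simp add: radical_def ltrace_def lmat_def)
  qed
  from this[of one] show ?thesis by simp
qed

lemma mpow_absorbed:
  obtains N p where "p \<in> vec.span (range (mpow a))" "m (mpow a N) (m a p) = mpow a N"
proof -
  define D where "D i = vec.span (range (\<lambda>j. mpow a (i + j)))" for i
  have "D (Suc i) \<subseteq> D i" for i
    unfolding D_def by (rule vec.span_mono) (auto intro: range_eqI[of _ _ "Suc _"])
  then obtain N where N: "D (Suc N) = D N"
    using decreasing_subspaces_stabilise[of D] by (auto simp: D_def)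
  interpret l: Vector_Spaces.linear "(*s)" "(*s)" "\<lambda>x. m (mpow a N) (m a x)"
    by (rule vec_linearI) (simp_all add: mult_add_right mult_scale_right)
  have "(\<lambda>j. mpow a (Suc N + j)) = (\<lambda>x. m (mpow a N) (m a x)) \<circ> mpow a"
    using mpow_add[of a N "Suc _"] by (simp add: fun_eq_iff)
  then have "range (\<lambda>j. mpow a (Suc N + j)) = (\<lambda>x. m (mpow a N) (m a x)) ` range (mpow a)"
    by (metis image_comp)
  then have "D (Suc N) = (\<lambda>x. m (mpow a N) (m a x)) ` vec.span (range (mpow a))"
    by (simp add: D_def l.span_image)
  moreover have "mpow a N \<in> D N" unfolding D_def by (rule vec.span_base) (auto intro: range_eqI[of _ _ 0])
  ultimately obtain p where "p \<in> vec.span (range (mpow a))" "mpow a N = m (mpow a N) (m a p)"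
    using N by auto
  then show thesis using that[of p N] by simp
qed

text \<open>Every element of the radical is nilpotent: if \<open>a\<^sup>N = a\<^sup>N (a p)\<close>, then \<open>(a p)\<^sup>N\<^sup>+\<^sup>1\<close> is an
  idempotent of the radical, hence zero, and it absorbs \<open>a\<^sup>N\<^sup>+\<^sup>1\<close>.\<close>
lemma radical_nil:
  assumes "a \<in> radical"
  shows "\<exists>M. mpow a M = 0"
proof -
  obtain N p where p: "p \<in> vec.span (range (mpow a))" and absorb: "m (mpow a N) (m a p) = mpow a N"
    by (rule mpow_absorbed)
  define z where "z = m a p"
  define M where "M = Suc N"
  have ap: "m a p = m p a" using powers_span_commute[OF p] .
  have zp: "m z p = m p z" unfolding z_def using ap by (metis mult_assoc)
  have absorbs: "m (mpow a M) (mpow z k) = mpow a M" for k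
  proof (induction k)
    case (Suc k)
    have "m (mpow a M) z = mpow a M" using absorb by (simp add: M_def z_def mult_assoc)
    then show ?case using Suc by (metis mult_assoc mpow.simps(2))
  qed simp
  define f where "f = mpow z M"
  have f_radical: "f \<in> radical"
    unfolding f_def M_def z_def using radical_mult_right[OF radical_mult_left[OF assms]]
    by (simp add: radical_mult_right[OF assms] mult_assoc)
  have f_eq: "f = m (mpow a M) (mpow p M)"
    unfolding f_def z_def by (rule mpow_mult_commuting[OF ap])
  have fp: "m f (mpow p M) = m (mpow p M) f"
    unfolding f_def using mpow_commute[OF zp] mpow_commute[of p "mpow z M"] by metis
  have "m f f = m (mpow a M) (m (mpow p M) f)" by (simp add: f_eq mult_assoc)
  also have "\<dots> = m (m (mpow a M) f) (mpow p M)" by (simp add: fp mult_assoc)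
  also have "\<dots> = f" using absorbs[of M] by (simp add: f_def flip: f_def f_eq)
  finally have "f = 0" using radical_idempotent[OF f_radical] by simp
  then show ?thesis using absorbs[of M] by (auto simp: f_def)
qed

section \<open>Wedderburn's theorem\<close>

definition invariant_subspace :: "('k^'n) set \<Rightarrow> ('k^'n) set \<Rightarrow> bool" where
  "invariant_subspace R W \<longleftrightarrow> vec.subspace W \<and> (\<forall>r\<in>R. \<forall>v\<in>W. m r v \<in> W)"

definition nil_subalgebra :: "('k^'n) set \<Rightarrow> bool" where
  "nil_subalgebra R \<longleftrightarrow> vec.subspace R \<and> (\<forall>r\<in>R. \<forall>s\<in>R. m r s \<in> R) \<and> (\<forall>r\<in>R. \<exists>M. mpow r M = 0)"

lemma nilpotent_fixed_mod_invariant: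
  assumes "mpow r M = 0" and W: "vec.subspace W" "\<And>v. v \<in> W \<Longrightarrow> m r v \<in> W"
    and u: "u = w + m r u" "w \<in> W"
  shows "u \<in> W"
proof -
  have "u - m (mpow r k) u \<in> W" for k
  proof (induction k)
    case 0 then show ?case using vec.subspace_0[OF W(1)] by simp
  next
    case (Suc k)
    have "u - m (mpow r (Suc k)) u = (u - m r u) + m r (u - m (mpow r k) u)"
      by (simp add: mult_diff_right mult_assoc)
    moreover have "u - m r u = w" using u(1) by (simp add: algebra_simps)
    ultimately show ?case using Suc u(2) W vec.subspace_add[OF W(1)] by simp
  qed
  from this[of M] show ?thesis using assms(1) by simp
qed

lemma invariant_subspace_add_orbit:
  assumes R: "nil_subalgebra R" and W: "invariant_subspace R W"
  shows "invariant_subspace R {w + m r u | w r. w \<in> W \<and> r \<in> R}"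
    (is "invariant_subspace R ?S")
proof -
  have R_sub: "vec.subspace R" and R_mult: "\<And>r s. r \<in> R \<Longrightarrow> s \<in> R \<Longrightarrow> m r s \<in> R"
    using R by (auto simp: nil_subalgebra_def)
  have W_sub: "vec.subspace W" and W_inv: "\<And>r v. r \<in> R \<Longrightarrow> v \<in> W \<Longrightarrow> m r v \<in> W"
    using W by (auto simp: invariant_subspace_def)
  have mem: "x \<in> ?S" if "w \<in> W" "r \<in> R" "x = w + m r u" for x w r
    using that by blast
  show ?thesis unfolding invariant_subspace_def
  proof (intro conjI ballI)
    show "vec.subspace ?S"
    proof (rule vec.subspaceI)
      show "0 \<in> ?S" using mem[of 0 0] vec.subspace_0[OF W_sub] vec.subspace_0[OF R_sub] by simp
      show "x + y \<in> ?S" if x: "x \<in> ?S" and y: "y \<in> ?S" for x y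
      proof -
        obtain w1 r1 w2 r2 where "x = w1 + m r1 u" "w1 \<in> W" "r1 \<in> R" "y = w2 + m r2 u" "w2 \<in> W" "r2 \<in> R"
          using x y by blast
        then show ?thesis
          by (intro mem[of "w1 + w2" "r1 + r2"])
            (auto simp: mult_add_left vec.subspace_add[OF W_sub] vec.subspace_add[OF R_sub])
      qed
      show "c *s x \<in> ?S" if x: "x \<in> ?S" for c x
      proof -
        obtain w r where "x = w + m r u" "w \<in> W" "r \<in> R" using x by blast
        then show ?thesis
          by (intro mem[of "c *s w" "c *s r"]) (auto simp: mult_scale_left vector_add_ldistrib
              vec.subspace_scale[OF W_sub] vec.subspace_scale[OF R_sub])
      qed
    qed
    show "m r v \<in> ?S" if r: "r \<in> R" and v: "v \<in> ?S" for r v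
    proof -
      obtain w r' where "v = w + m r' u" "w \<in> W" "r' \<in> R" using v by blast
      then show ?thesis
        by (intro mem[of "m r w" "m r r'"]) (auto simp: mult_add_right mult_assoc r W_inv R_mult)
    qed
  qed
qed

text \<open>\<open>U\<^sub>1 + R u\<close> is invariant, so it is \<open>U\<^sub>1\<close> or \<open>U\<close>; in the latter case \<open>u = w + r u\<close> with
  \<open>w \<in> U\<^sub>1\<close>, and nilpotency of \<open>r\<close> forces \<open>u \<in> U\<^sub>1\<close>.\<close>
lemma maximal_invariant_subspace_absorbs_action:
  assumes R: "nil_subalgebra R" and U: "invariant_subspace R U"
    and U1: "invariant_subspace R U1" "U1 \<subseteq> U" "U1 \<noteq> U"
    and U1_max: "\<And>W. invariant_subspace R W \<Longrightarrow> U1 \<subseteq> W \<Longrightarrow> W \<subseteq> U \<Longrightarrow> W \<noteq> U \<Longrightarrow> W = U1"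
    and r: "r \<in> R" and u: "u \<in> U"
  shows "m r u \<in> U1"
proof -
  have U1_sub: "vec.subspace U1" and U1_inv: "\<And>r v. r \<in> R \<Longrightarrow> v \<in> U1 \<Longrightarrow> m r v \<in> U1"
    using U1(1) by (auto simp: invariant_subspace_def)
  have U_sub: "vec.subspace U" and U_inv: "\<And>r v. r \<in> R \<Longrightarrow> v \<in> U \<Longrightarrow> m r v \<in> U"
    using U by (auto simp: invariant_subspace_def)
  define S where "S = {w + m r u | w r. w \<in> U1 \<and> r \<in> R}"
  have S_inv: "invariant_subspace R S"
    unfolding S_def using invariant_subspace_add_orbit[OF R U1(1)] .
  have "0 \<in> R" using R vec.subspace_0 by (auto simp: nil_subalgebra_def)
  then have U1_S: "U1 \<subseteq> S" unfolding S_def by force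
  have "S \<subseteq> U" using U1(2) by (auto simp: S_def intro!: vec.subspace_add[OF U_sub] U_inv u)
  moreover have "S \<noteq> U"
  proof
    assume "S = U"
    then obtain w r' where u_eq: "u = w + m r' u" "w \<in> U1" "r' \<in> R" using u by (auto simp: S_def)
    obtain M where "mpow r' M = 0" using R u_eq(3) by (auto simp: nil_subalgebra_def)
    then have "u \<in> U1" using nilpotent_fixed_mod_invariant U1_sub U1_inv[OF u_eq(3)] u_eq(1,2) by blast
    then have "S \<subseteq> U1" by (auto simp: S_def intro!: vec.subspace_add[OF U1_sub] U1_inv)
    then show False using \<open>S = U\<close> U1_S U1(2,3) by blast
  qed
  ultimately have "S = U1" using U1_max S_inv U1_S by blast
  moreover have "m r u \<in> S" unfolding S_def using r vec.subspace_0[OF U1_sub] by force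
  ultimately show ?thesis by simp
qed

lemma nil_subalgebra_spanning_action_trivial:
  assumes R: "nil_subalgebra R" and U: "invariant_subspace R U"
    and U_span: "U \<subseteq> vec.span {m r v | r v. r \<in> R \<and> v \<in> U}"
  shows "U \<subseteq> {0}"
proof (rule ccontr)
  assume "\<not> U \<subseteq> {0}"
  define P where "P W \<longleftrightarrow> invariant_subspace R W \<and> W \<subseteq> U \<and> W \<noteq> U" for W
  have "P {0}"
    using \<open>\<not> U \<subseteq> {0}\<close> vec.subspace_0[of U] U by (auto simp: P_def invariant_subspace_def)
  moreover have "\<And>W. P W \<Longrightarrow> vec.subspace W" by (simp add: P_def invariant_subspace_def)
  ultimately obtain U1 where U1: "P U1" and U1_max: "\<And>W. P W \<Longrightarrow> U1 \<subseteq> W \<Longrightarrow> W = U1"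
    using exists_maximal_subspace[of P "{0}"] by blast
  have "m r u \<in> U1" if "r \<in> R" "u \<in> U" for r u
    using maximal_invariant_subspace_absorbs_action[OF R U _ _ _ _ that] U1 U1_max by (auto simp: P_def)
  then have "vec.span {m r v | r v. r \<in> R \<and> v \<in> U} \<subseteq> U1"
    using U1 by (intro vec.span_minimal) (auto simp: P_def invariant_subspace_def)
  then show False using U_span U1 by (auto simp: P_def)
qed

primrec action_chain :: "('k^'n) set \<Rightarrow> nat \<Rightarrow> ('k^'n) set" where
  "action_chain R 0 = UNIV"
| "action_chain R (Suc i) = vec.span {m r v | r v. r \<in> R \<and> v \<in> action_chain R i}"

lemma subspace_action_chain: "vec.subspace (action_chain R i)"
  by (cases i) simp_all

lemma action_chain_decreasing: "action_chain R (Suc i) \<subseteq> action_chain R i"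
proof (induction i)
  case (Suc i)
  then have "{m r v | r v. r \<in> R \<and> v \<in> action_chain R (Suc i)} \<subseteq> {m r v | r v. r \<in> R \<and> v \<in> action_chain R i}"
    by blast
  then show ?case by (simp add: vec.span_mono)
qed simp

lemma invariant_action_chain:
  assumes "\<And>r s. r \<in> R \<Longrightarrow> s \<in> R \<Longrightarrow> m r s \<in> R"
  shows "invariant_subspace R (action_chain R i)"
proof (cases i)
  case (Suc j)
  let ?X = "{m r v | r v. r \<in> R \<and> v \<in> action_chain R j}"
  have "m r ` vec.span ?X \<subseteq> vec.span ?X" if r: "r \<in> R" for r
  proof -
    interpret l: Vector_Spaces.linear "(*s)" "(*s)" "m r" by (rule linear_left_mult)
    have "m r ` ?X \<subseteq> ?X"
    proof (rule image_subsetI)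
      fix x assume "x \<in> ?X"
      then obtain r' v where "x = m r' v" "r' \<in> R" "v \<in> action_chain R j" by blast
      moreover have "m r (m r' v) = m (m r r') v" by (simp add: mult_assoc)
      ultimately show "m r x \<in> ?X" using r assms by blast
    qed
    then show ?thesis by (simp add: l.span_image[symmetric] vec.span_mono)
  qed
  then show ?thesis using Suc by (auto simp: invariant_subspace_def)
qed (simp add: invariant_subspace_def)

lemma foldr_mult_in_action_chain: "set as \<subseteq> R \<Longrightarrow> foldr m as one \<in> action_chain R (length as)"
  by (induction as) (auto intro!: vec.span_base)

definition two_sided_ideal :: "('k^'n) set \<Rightarrow> bool" where
  "two_sided_ideal J \<longleftrightarrow> 0 \<in> J \<and> (\<forall>a\<in>J. \<forall>b\<in>J. a + b \<in> J) \<and> (\<forall>c. \<forall>a\<in>J. c *s a \<in> J) \<and>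
     (\<forall>s. \<forall>a\<in>J. m s a \<in> J \<and> m a s \<in> J)"

definition nilpotent_subset :: "('k^'n) set \<Rightarrow> bool" where
  "nilpotent_subset J \<longleftrightarrow> (\<exists>k\<ge>1. \<forall>as. length as = k \<and> set as \<subseteq> J \<longrightarrow> foldr m as one = 0)"

definition semisimple :: bool where
  "semisimple \<longleftrightarrow> (\<forall>J. two_sided_ideal J \<and> nilpotent_subset J \<longrightarrow> J \<subseteq> {0})"

lemma nil_subalgebra_nilpotent:
  assumes R: "nil_subalgebra R"
  shows "nilpotent_subset R"
proof -
  have R_mult: "\<And>r s. r \<in> R \<Longrightarrow> s \<in> R \<Longrightarrow> m r s \<in> R" using R by (simp add: nil_subalgebra_def)
  obtain N where N: "action_chain R (Suc N) = action_chain R N"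
    using decreasing_subspaces_stabilise[of "action_chain R"] subspace_action_chain action_chain_decreasing
    by blast
  have "vec.span {m r v | r v. r \<in> R \<and> v \<in> action_chain R N} = action_chain R N"
    using N by (simp only: action_chain.simps(2))
  then have "action_chain R N \<subseteq> vec.span {m r v | r v. r \<in> R \<and> v \<in> action_chain R N}"
    by (rule equalityD2)
  then have "action_chain R N \<subseteq> {0}"
    using nil_subalgebra_spanning_action_trivial[OF R invariant_action_chain[OF R_mult, of N]] by blast
  then have chain_zero: "action_chain R (Suc N) \<subseteq> {0}" unfolding N .
  show ?thesis unfolding nilpotent_subset_def
  proof (intro exI[of _ "Suc N"] conjI allI impI)
    fix as assume "length as = Suc N \<and> set as \<subseteq> R"
    then show "foldr m as one = 0" using foldr_mult_in_action_chain[of as R] chain_zero by auto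
  qed simp
qed

lemma radical_nil_subalgebra: "nil_subalgebra radical"
  using subspace_radical radical_mult_right radical_nil by (simp add: nil_subalgebra_def)

lemma two_sided_ideal_radical: "two_sided_ideal radical"
  using vec.subspace_0[OF subspace_radical] vec.subspace_add[OF subspace_radical]
    vec.subspace_scale[OF subspace_radical] radical_mult_left radical_mult_right
  by (simp add: two_sided_ideal_def)

lemma semisimple_radical_trivial: "semisimple \<Longrightarrow> radical \<subseteq> {0}"
  using two_sided_ideal_radical nil_subalgebra_nilpotent[OF radical_nil_subalgebra]
  by (simp add: semisimple_def)

definition gram :: "'k^'n^'n" where "gram = (\<chi> k l. tform (axis k 1) (axis l 1))"

lemma gram_mult_vector: "(gram *v y) $ k = tform (axis k 1) y"
  by (simp add: gram_def matrix_vector_mult_def tform_expand_right[of "axis k 1" y] mult.commute)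

lemma transpose_gram: "transpose gram = gram"
  by (simp add: gram_def transpose_def tform_commute)

lemma invertible_gram:
  assumes semisimple
  shows "invertible gram"
  unfolding invertible_left_inverse matrix_left_invertible_ker
proof (intro allI impI)
  fix y assume "gram *v y = 0"
  then have "tform (axis k 1) y = 0" for k using gram_mult_vector[of y k] by simp
  then have "tform x y = 0" for x using tform_expand_left[of x y] by simp
  then have "y \<in> radical" unfolding radical_def by (simp add: tform_commute)
  then show "y = 0" using semisimple_radical_trivial[OF assms] by auto
qed

context
  fixes cj :: "'k \<Rightarrow> 'k" and g :: "'k^'n \<Rightarrow> 'k^'n"
  assumes cj: "field_involution cj"
    and add: "\<And>x y. g (x + y) = g x + g y" and scale: "\<And>c x. g (c *s x) = cj c *s g x"
begin

lemma ltrace_semilinear_image: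
  assumes "inj g" and intertwine: "lmat (g x) ** matrix g = matrix g ** map_matrix cj M"
  shows "ltrace (g x) = cj (trace M)"
proof -
  obtain A' where A: "matrix g ** A' = mat 1" "A' ** matrix g = mat 1"
    using invertible_matrix_semilinear[of cj g, OF cj add scale assms(1)] unfolding invertible_def by blast
  have "lmat (g x) = lmat (g x) ** (matrix g ** A')" by (simp add: A)
  also have "\<dots> = matrix g ** (map_matrix cj M ** A')" by (simp add: matrix_mul_assoc intertwine)
  finally have "ltrace (g x) = trace (matrix g ** (map_matrix cj M ** A'))" by (simp add: ltrace_def)
  also have "\<dots> = trace ((map_matrix cj M ** A') ** matrix g)" by (rule trace_mul_sym)
  also have "\<dots> = trace (map_matrix cj M)" by (simp add: matrix_mul_assoc[symmetric] A)
  finally show ?thesis by (simp add: trace_map_matrix[OF cj])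
qed

lemma lmat_intertwine_hom:
  assumes "\<And>a b. g (m a b) = m (g a) (g b)"
  shows "lmat (g x) ** matrix g = matrix g ** map_matrix cj (lmat x)"
  unfolding matrix_eq
proof
  fix w
  have "(lmat (g x) ** matrix g) *v w = g (m x (map_vector cj w))"
    by (simp add: matrix_vector_mul_assoc[symmetric] matrix_semilinear_mult[of cj g, OF cj add scale]
        lmat_mult_vector assms)
  also have "\<dots> = matrix g *v map_vector cj (lmat x *v map_vector cj w)"
    unfolding lmat_mult_vector by (rule semilinear_eq_matrix[of cj g, OF cj add scale])
  also have "\<dots> = (matrix g ** map_matrix cj (lmat x)) *v w"
    by (simp add: map_vector_matrix_vector_mult[OF cj] map_vector_involutive[OF cj]
        matrix_vector_mul_assoc[symmetric])
  finally show "(lmat (g x) ** matrix g) *v w = (matrix g ** map_matrix cj (lmat x)) *v w" .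
qed

lemma lmat_intertwine_antihom:
  assumes "\<And>a b. g (m a b) = m (g b) (g a)"
  shows "lmat (g x) ** matrix g = matrix g ** map_matrix cj (rmat x)"
  unfolding matrix_eq
proof
  fix w
  have "(lmat (g x) ** matrix g) *v w = g (m (map_vector cj w) x)"
    by (simp add: matrix_vector_mul_assoc[symmetric] matrix_semilinear_mult[of cj g, OF cj add scale]
        lmat_mult_vector assms)
  also have "\<dots> = matrix g *v map_vector cj (rmat x *v map_vector cj w)"
    unfolding rmat_mult_vector by (rule semilinear_eq_matrix[of cj g, OF cj add scale])
  also have "\<dots> = (matrix g ** map_matrix cj (rmat x)) *v w"
    by (simp add: map_vector_matrix_vector_mult[OF cj] map_vector_involutive[OF cj]
        matrix_vector_mul_assoc[symmetric])
  finally show "(lmat (g x) ** matrix g) *v w = (matrix g ** map_matrix cj (rmat x)) *v w" .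
qed

end

end

section \<open>The Casimir element of a semisimple algebra\<close>

locale semisimple_algebra = fd_algebra m one
  for m :: "'k::real_normed_field^'n::finite \<Rightarrow> 'k^'n \<Rightarrow> 'k^'n" and one +
  assumes semisimple: semisimple
begin

definition casimir :: "'k^'n^'n" where "casimir = matrix_inv gram"

lemma gram_casimir: "gram ** casimir = mat 1" and casimir_gram: "casimir ** gram = mat 1"
proof -
  have "\<exists>A'. gram ** A' = mat 1 \<and> A' ** gram = mat 1"
    using invertible_gram[OF semisimple] unfolding invertible_def .
  then have "gram ** casimir = mat 1 \<and> casimir ** gram = mat 1"
    unfolding casimir_def matrix_inv_def by (rule someI_ex)
  then show "gram ** casimir = mat 1" "casimir ** gram = mat 1" by auto
qed

lemma transpose_casimir: "transpose casimir = casimir"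
proof -
  have "transpose (gram ** casimir) = mat 1" by (simp add: gram_casimir)
  then have left_inverse: "transpose casimir ** gram = mat 1"
    by (simp add: matrix_transpose_mul transpose_gram)
  have "transpose casimir = transpose casimir ** (gram ** casimir)" by (simp add: gram_casimir)
  also have "\<dots> = casimir" by (simp add: matrix_mul_assoc left_inverse)
  finally show ?thesis .
qed

lemma casimir_commute: "casimir $ i $ j = casimir $ j $ i"
proof -
  have "transpose casimir $ j $ i = casimir $ j $ i" by (simp only: transpose_casimir)
  then show ?thesis by (simp add: transpose_def)
qed

lemma coordinate_eq_tform: "v $ p = (\<Sum>l\<in>UNIV. casimir $ p $ l * tform (axis l 1) v)"
proof -
  have "v $ p = (casimir *v (gram *v v)) $ p" by (simp add: matrix_vector_mul_assoc casimir_gram)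
  also have "\<dots> = (\<Sum>l\<in>UNIV. casimir $ p $ l * (gram *v v) $ l)"
    unfolding matrix_vector_mult_def[of casimir] by simp
  finally show ?thesis by (simp only: gram_mult_vector)
qed

lemma tform_nondegenerate:
  assumes "\<And>x. tform x a = tform x b"
  shows "a = b"
proof -
  have "a - b \<in> radical" using assms by (simp add: radical_def tform_commute[of "a - b"] tform_diff_right)
  then show ?thesis using semisimple_radical_trivial[OF semisimple] by auto
qed

lemma tform_rotate: "tform a (m b c) = tform b (m c a)"
  using ltrace_mult_commute[of a "m b c"] by (simp add: tform_def mult_assoc)

text \<open>\<open>casimir\<close> is the inverse Gram matrix of the trace form, so \<open>\<Sum>\<^sub>l casimir\<^sub>k\<^sub>l e\<^sub>l\<close> is the
  basis dual to \<open>e\<^sub>k\<close>; the Casimir element is \<open>\<Sum>\<^sub>k\<^sub>l casimir\<^sub>k\<^sub>l e\<^sub>k \<otimes> e\<^sub>l\<close>.\<close>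
definition casimir_product :: "'k^'n" where
  "casimir_product = (\<Sum>k\<in>UNIV. \<Sum>l\<in>UNIV. casimir $ k $ l *s m (axis k 1) (axis l 1))"

lemma tform_casimir_product:
  "tform x casimir_product = (\<Sum>q\<in>UNIV. \<Sum>l\<in>UNIV. casimir $ q $ l * tform x (m (axis q 1) (axis l 1)))"
  by (simp add: casimir_product_def tform_sum_right tform_scale_right)

lemma casimir_product_eq_one: "casimir_product = one"
proof (rule tform_nondegenerate)
  fix x
  have "tform x one = (\<Sum>q\<in>UNIV. m x (axis q 1) $ q)" by (simp add: tform_one_right ltrace_eq_sum)
  also have "\<dots> = (\<Sum>q\<in>UNIV. \<Sum>l\<in>UNIV. casimir $ q $ l * tform (axis l 1) (m x (axis q 1)))"
    by (rule sum.cong[OF refl]) (rule coordinate_eq_tform)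
  also have "\<dots> = tform x casimir_product"
    by (simp only: tform_casimir_product tform_rotate[of "axis _ 1" x])
  finally show "tform x casimir_product = tform x one" by simp
qed

text \<open>Unlike for arbitrary algebras, left and right multiplications have equal traces.\<close>
lemma trace_rmat: "trace (rmat y) = ltrace y"
proof -
  have "trace (rmat y) = (\<Sum>q\<in>UNIV. m (axis q 1) y $ q)" by (simp add: rmat_def trace_def matrix_def)
  also have "\<dots> = (\<Sum>q\<in>UNIV. \<Sum>l\<in>UNIV. casimir $ q $ l * tform (axis l 1) (m (axis q 1) y))"
    by (rule sum.cong[OF refl]) (rule coordinate_eq_tform)
  also have "\<dots> = (\<Sum>q\<in>UNIV. \<Sum>l\<in>UNIV. casimir $ l $ q * tform y (m (axis l 1) (axis q 1)))"
  proof (intro sum.cong refl)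
    fix q l
    show "casimir $ q $ l * tform (axis l 1) (m (axis q 1) y) = casimir $ l $ q * tform y (m (axis l 1) (axis q 1))"
      using tform_rotate[of "axis l 1" "axis q 1" y] tform_rotate[of "axis q 1" y "axis l 1"]
        casimir_commute[of q l] by simp
  qed
  also have "\<dots> = tform y casimir_product" unfolding tform_casimir_product by (rule sum.swap)
  finally show ?thesis by (simp add: casimir_product_eq_one tform_one_right)
qed

lemma tform_eq_gram: "tform x y = (\<Sum>p\<in>UNIV. x $ p * (\<Sum>q\<in>UNIV. y $ q * gram $ p $ q))"
proof -
  have "tform x y = (\<Sum>p\<in>UNIV. x $ p * tform (axis p 1) y)" by (rule tform_expand_left)
  also have "\<dots> = (\<Sum>p\<in>UNIV. x $ p * (\<Sum>q\<in>UNIV. y $ q * gram $ p $ q))"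
    by (rule sum.cong[OF refl], subst tform_expand_right) (simp add: gram_def)
  finally show ?thesis .
qed

lemma lmat_casimir: "lmat y ** casimir = casimir ** transpose (rmat y)"
proof -
  have "(gram ** lmat y) $ k $ q = (transpose (rmat y) ** gram) $ k $ q" for k q
  proof -
    have "(gram ** lmat y) $ k $ q = tform (axis k 1) (m y (axis q 1))"
      by (simp add: matrix_matrix_mult_def lmat_def matrix_def gram_def mult.commute
          tform_expand_right[of "axis k 1" "m y (axis q 1)"])
    also have "\<dots> = tform (m (axis k 1) y) (axis q 1)" by (simp add: tform_mult_left)
    also have "\<dots> = (transpose (rmat y) ** gram) $ k $ q"
      by (simp add: matrix_matrix_mult_def rmat_def matrix_def transpose_def gram_def
          tform_expand_left[of "m (axis k 1) y" "axis q 1"])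
    finally show ?thesis .
  qed
  then have gram_lmat: "gram ** lmat y = transpose (rmat y) ** gram" by (simp add: vec_eq_iff)
  have "lmat y ** casimir = (casimir ** gram) ** lmat y ** casimir"
    by (simp add: casimir_gram)
  also have "\<dots> = casimir ** (gram ** lmat y) ** casimir"
    by (simp add: matrix_mul_assoc)
  also have "\<dots> = casimir ** (transpose (rmat y) ** gram) ** casimir"
    by (simp only: gram_lmat)
  also have "\<dots> = casimir ** transpose (rmat y) ** (gram ** casimir)"
    by (simp add: matrix_mul_assoc)
  finally show ?thesis by (simp add: gram_casimir)
qed

context
  fixes cj :: "'k \<Rightarrow> 'k" and g :: "'k^'n \<Rightarrow> 'k^'n"
  assumes cj: "field_involution cj"
    and add: "\<And>x y. g (x + y) = g x + g y" and scale: "\<And>c x. g (c *s x) = cj c *s g x"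
    and inj: "inj g"
begin

lemma tform_semilinear_image:
  assumes hom_or_antihom: "(\<forall>a b. g (m a b) = m (g a) (g b)) \<or> (\<forall>a b. g (m a b) = m (g b) (g a))"
  shows "tform (g a) (g b) = cj (tform a b)"
  using hom_or_antihom
proof
  assume hom: "\<forall>a b. g (m a b) = m (g a) (g b)"
  have "ltrace (g x) = cj (ltrace x)" for x
    using ltrace_semilinear_image[of cj g, OF cj add scale inj lmat_intertwine_hom[of cj g, OF cj add scale]] hom
    by (simp add: ltrace_def)
  then show ?thesis by (simp add: tform_def hom[rule_format, symmetric])
next
  assume antihom: "\<forall>a b. g (m a b) = m (g b) (g a)"
  have "ltrace (g x) = cj (ltrace x)" for x
    using ltrace_semilinear_image[of cj g, OF cj add scale inj lmat_intertwine_antihom[of cj g, OF cj add scale]] antihom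
    by (simp add: trace_rmat)
  then show ?thesis by (simp add: tform_def antihom[rule_format, symmetric] ltrace_mult_commute[of b])
qed

lemma gram_congruence:
  assumes tform_image: "\<And>a b. tform (g a) (g b) = cj (tform a b)"
  shows "transpose (matrix g) ** gram ** matrix g = map_matrix cj gram"
proof -
  let ?A = "matrix g"
  have "(transpose ?A ** gram ** ?A) $ k $ l = cj (gram $ k $ l)" for k l
  proof -
    have "(transpose ?A ** gram ** ?A) $ k $ l = (\<Sum>q\<in>UNIV. \<Sum>p\<in>UNIV. ?A$p$k * gram$p$q * ?A$q$l)"
      by (simp add: matrix_matrix_mult_def transpose_def sum_distrib_right)
    also have "\<dots> = (\<Sum>p\<in>UNIV. ?A$p$k * (\<Sum>q\<in>UNIV. ?A$q$l * gram$p$q))"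
      by (subst sum.swap) (simp add: sum_distrib_left mult_ac)
    also have "\<dots> = tform (g (axis k 1)) (g (axis l 1))" by (simp add: tform_eq_gram matrix_def)
    also have "\<dots> = cj (gram $ k $ l)" by (simp add: tform_image gram_def)
    finally show ?thesis .
  qed
  then show ?thesis by (simp add: vec_eq_iff)
qed

lemma casimir_congruence:
  assumes "\<And>a b. tform (g a) (g b) = cj (tform a b)"
  shows "matrix g ** map_matrix cj casimir ** transpose (matrix g) = casimir"
proof -
  let ?A = "matrix g"
  obtain A' where A: "?A ** A' = mat 1" "A' ** ?A = mat 1"
    using invertible_matrix_semilinear[of cj g, OF cj add scale inj] unfolding invertible_def by blast
  have "transpose ?A ** gram = transpose ?A ** gram ** (?A ** A')" by (simp add: A)
  also have "\<dots> = map_matrix cj gram ** A'" by (simp add: gram_congruence[OF assms] matrix_mul_assoc)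
  finally have A_gram: "transpose ?A ** gram = map_matrix cj gram ** A'" .
  have cj_inverse: "map_matrix cj casimir ** map_matrix cj gram = mat 1"
    by (simp add: map_matrix_matrix_mult[OF cj, symmetric] casimir_gram map_matrix_mat_1[OF cj])
  let ?X = "?A ** map_matrix cj casimir ** transpose ?A"
  have "?X ** gram = ?A ** (map_matrix cj casimir ** (transpose ?A ** gram))"
    by (simp add: matrix_mul_assoc)
  also have "\<dots> = ?A ** (map_matrix cj casimir ** map_matrix cj gram) ** A'"
    by (simp add: A_gram matrix_mul_assoc)
  also have "\<dots> = mat 1" by (simp add: cj_inverse A)
  finally have "?X ** gram = mat 1" .
  then have "?X = ?X ** (gram ** casimir)" by (simp add: gram_casimir)
  also have "\<dots> = casimir" by (simp add: matrix_mul_assoc \<open>?X ** gram = mat 1\<close>)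
  finally show ?thesis .
qed

end

end

section \<open>The Casimir section of a bundle of semisimple algebras\<close>

definition chosen_triv :: "('g, 'x, 'e, 'k::real_normed_field, 'n::finite) algbundle \<Rightarrow> 'x \<Rightarrow> 'x set \<times> ('e \<Rightarrow> 'k^'n)" where
  "chosen_triv B x = (SOME p. x \<in> fst p \<and> local_triv B (fst p) (snd p))"

definition chosen_chart :: "('g, 'x, 'e, 'k::real_normed_field, 'n::finite) algbundle \<Rightarrow> 'x \<Rightarrow> 'e \<Rightarrow> 'k^'n" where
  "chosen_chart B x = snd (chosen_triv B x)"

definition chart_inv :: "('g, 'x, 'e, 'k::real_normed_field, 'n::finite) algbundle \<Rightarrow> 'x \<Rightarrow> 'k^'n \<Rightarrow> 'e" where
  "chart_inv B x v = (SOME e. e \<in> fiberE B x \<and> chosen_chart B x e = v)"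

definition index_pairs :: "('n::finite \<times> 'n) list" where
  "index_pairs = (SOME xs. set xs = UNIV \<and> distinct xs)"

text \<open>The tensor \<open>\<Sum>\<^sub>k\<^sub>l C\<^sub>k\<^sub>l e\<^sub>k \<otimes> e\<^sub>l\<close> in \<open>A\<^sub>x \<otimes> A\<^sub>x\<close>, where \<open>e\<^sub>k\<close> is the standard basis of the typical
  fibre carried to \<open>A\<^sub>x\<close> by the chosen trivialization at \<open>x\<close>.\<close>
definition matrix_tensor :: "('g, 'x, 'e, 'k::real_normed_field, 'n::finite) algbundle \<Rightarrow> 'x \<Rightarrow> 'k^'n^'n \<Rightarrow> ('e \<times> 'e) list" where
  "matrix_tensor B x C = map (\<lambda>(k, l). (chart_inv B x (C $ k $ l *s axis k 1), chart_inv B x (axis l 1))) index_pairs"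

definition casimir_section :: "('g, 'x, 'e, 'k::real_normed_field, 'n::finite) algbundle \<Rightarrow> 'x \<Rightarrow> ('e \<times> 'e) list" where
  "casimir_section B x = matrix_tensor B x (semisimple_algebra.casimir (tmul B))"

definition semilinear_fiber_hom_or_antihom ::
    "('k \<Rightarrow> 'k) \<Rightarrow> ('g, 'x, 'e, 'k::real_normed_field, 'n::finite) algbundle \<Rightarrow> 'x \<Rightarrow> 'x \<Rightarrow> ('e \<Rightarrow> 'e) \<Rightarrow> bool" where
  "semilinear_fiber_hom_or_antihom cj B x y h \<longleftrightarrow>
     (\<forall>a\<in>fiberE B x. h a \<in> fiberE B y) \<and> inj_on h (fiberE B x) \<and>
     (\<forall>a\<in>fiberE B x. \<forall>b\<in>fiberE B x. h (badd B a b) = badd B (h a) (h b)) \<and>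
     (\<forall>c. \<forall>a\<in>fiberE B x. h (bsmult B c a) = bsmult B (cj c) (h a)) \<and>
     ((\<forall>a\<in>fiberE B x. \<forall>b\<in>fiberE B x. h (bmul B a b) = bmul B (h a) (h b)) \<or>
      (\<forall>a\<in>fiberE B x. \<forall>b\<in>fiberE B x. h (bmul B a b) = bmul B (h b) (h a)))"

lemma index_pairs: "set (index_pairs :: ('n::finite \<times> 'n) list) = UNIV" "distinct (index_pairs :: ('n \<times> 'n) list)"
proof -
  have "\<exists>xs. set xs = (UNIV :: ('n \<times> 'n) set) \<and> distinct xs"
    using finite_distinct_list[of "UNIV :: ('n \<times> 'n) set"] by simp
  then have "set (index_pairs :: ('n \<times> 'n) list) = UNIV \<and> distinct (index_pairs :: ('n \<times> 'n) list)"
    unfolding index_pairs_def by (rule someI_ex)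
  then show "set (index_pairs :: ('n \<times> 'n) list) = UNIV" "distinct (index_pairs :: ('n \<times> 'n) list)"
    by auto
qed

lemma sum_list_index_pairs: "sum_list (map f index_pairs) = (\<Sum>k\<in>UNIV. \<Sum>l\<in>UNIV. f (k, l))"
  by (simp add: sum_list_distinct_conv_sum_set index_pairs sum.cartesian_product
      UNIV_Times_UNIV[symmetric] del: UNIV_Times_UNIV)

lemma local_triv_subset: "local_triv B W \<phi> \<Longrightarrow> W \<subseteq> topspace (bbase B)"
  unfolding local_triv_def using openin_subset by blast

lemma local_triv_alg:
  assumes "local_triv B W \<phi>" "x \<in> W"
  shows "bzero B x \<in> fiberE B x" "\<phi> (bzero B x) = 0" "bone B x \<in> fiberE B x" "\<phi> (bone B x) = tone B"
    and "a \<in> fiberE B x \<Longrightarrow> b \<in> fiberE B x \<Longrightarrow> badd B a b \<in> fiberE B x \<and> \<phi> (badd B a b) = \<phi> a + \<phi> b"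
    and "a \<in> fiberE B x \<Longrightarrow> bsmult B c a \<in> fiberE B x \<and> \<phi> (bsmult B c a) = c *s \<phi> a"
    and "a \<in> fiberE B x \<Longrightarrow> b \<in> fiberE B x \<Longrightarrow> bmul B a b \<in> fiberE B x \<and> \<phi> (bmul B a b) = tmul B (\<phi> a) (\<phi> b)"
  using assms unfolding local_triv_def by blast+

lemma local_triv_bij_fiber:
  assumes "local_triv B W \<phi>" "x \<in> W"
  shows "inj_on \<phi> (fiberE B x)" and "\<exists>e\<in>fiberE B x. \<phi> e = w"
proof -
  let ?S = "{v \<in> topspace (btotal B). bproj B v \<in> W}"
  have hm: "homeomorphic_map (subtopology (btotal B) ?S) (prod_topology (subtopology (bbase B) W) euclidean)
      (\<lambda>v. (bproj B v, \<phi> v))"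
    using assms(1) unfolding local_triv_def by blast
  have inj: "inj_on (\<lambda>v. (bproj B v, \<phi> v)) ?S"
    using homeomorphic_imp_injective_map[OF hm] by (simp add: Int_absorb1)
  have onto: "(\<lambda>v. (bproj B v, \<phi> v)) ` ?S = (topspace (bbase B) \<inter> W) \<times> UNIV"
    using homeomorphic_imp_surjective_map[OF hm] by (simp add: Int_absorb1)
  have "fiberE B x \<subseteq> ?S" using assms(2) by (auto simp: fiberE_def)
  then show "inj_on \<phi> (fiberE B x)"
    using inj by (auto simp: inj_on_def fiberE_def)
  have "x \<in> topspace (bbase B)" using local_triv_subset[OF assms(1)] assms(2) by auto
  then have "(x, w) \<in> (\<lambda>v. (bproj B v, \<phi> v)) ` ?S" using onto assms(2) by auto
  then obtain v where "v \<in> ?S" "bproj B v = x" "\<phi> v = w" by auto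
  then show "\<exists>e\<in>fiberE B x. \<phi> e = w" by (auto simp: fiberE_def)
qed

lemma tcoord_flip: "tcoord \<phi> (map (\<lambda>(a, b). (b, a)) l) = transpose (tcoord \<phi> l)"
  by (induction l) (auto simp: tcoord_def outer_def transpose_def vec_eq_iff)

lemma tcoord_map_matrix_tensor:
  fixes \<phi> :: "'e \<Rightarrow> 'k::real_normed_field^'n::finite" and B :: "('g, 'x, 'e, 'k, 'n) algbundle"
  assumes scale: "\<And>c v. \<phi> (h1 (chart_inv B x (c *s v))) = cj c *s \<phi> (h1 (chart_inv B x v))"
  shows "tcoord \<phi> (map (\<lambda>(a, b). (h1 a, h2 b)) (matrix_tensor B x C)) =
    matrix (\<lambda>v. \<phi> (h1 (chart_inv B x v))) ** map_matrix cj C ** transpose (matrix (\<lambda>v. \<phi> (h2 (chart_inv B x v))))"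
proof -
  let ?g1 = "\<lambda>v. \<phi> (h1 (chart_inv B x v))" and ?g2 = "\<lambda>v. \<phi> (h2 (chart_inv B x v))"
  have "tcoord \<phi> (map (\<lambda>(a, b). (h1 a, h2 b)) (matrix_tensor B x C)) =
      (\<Sum>k\<in>UNIV. \<Sum>l\<in>UNIV. outer (?g1 (C $ k $ l *s axis k 1)) (?g2 (axis l 1)))"
    unfolding tcoord_def matrix_tensor_def map_map by (simp add: o_def split_def sum_list_index_pairs)
  also have "\<dots> = matrix ?g1 ** map_matrix cj C ** transpose (matrix ?g2)"
  proof -
    have "(\<Sum>k\<in>UNIV. \<Sum>l\<in>UNIV. outer (?g1 (C $ k $ l *s axis k 1)) (?g2 (axis l 1))) $ p $ q =
        (\<Sum>l\<in>UNIV. \<Sum>k\<in>UNIV. cj (C $ k $ l) * ?g1 (axis k 1) $ p * ?g2 (axis l 1) $ q)" for p q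
      by (subst sum.swap) (simp add: outer_def scale mult.assoc)
    then show ?thesis
      by (simp add: vec_eq_iff matrix_matrix_mult_def transpose_def matrix_def sum_distrib_left
          sum_distrib_right mult_ac)
  qed
  finally show ?thesis .
qed

locale semisimple_alg_bundle =
  fixes B :: "('g, 'x, 'e, 'k::real_normed_field, 'n::finite) algbundle"
  assumes loc_triv: "loc_triv_alg_bundle B" and semisimple_fibers: "semisimple_fibers B"
begin

lemma chosen_triv:
  assumes "x \<in> topspace (bbase B)"
  shows "x \<in> fst (chosen_triv B x)" "local_triv B (fst (chosen_triv B x)) (chosen_chart B x)"
proof -
  obtain W \<phi> where "x \<in> W" "local_triv B W \<phi>"
    using loc_triv assms unfolding loc_triv_alg_bundle_def by blast
  then have "\<exists>p. x \<in> fst p \<and> local_triv B (fst p) (snd p)" by (intro exI[of _ "(W, \<phi>)"]) simp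
  then have "x \<in> fst (chosen_triv B x) \<and> local_triv B (fst (chosen_triv B x)) (snd (chosen_triv B x))"
    unfolding chosen_triv_def by (rule someI_ex)
  then show "x \<in> fst (chosen_triv B x)" "local_triv B (fst (chosen_triv B x)) (chosen_chart B x)"
    unfolding chosen_chart_def by auto
qed

lemma chart_inv:
  assumes "x \<in> topspace (bbase B)"
  shows "chart_inv B x v \<in> fiberE B x" "chosen_chart B x (chart_inv B x v) = v"
proof -
  have "\<exists>e. e \<in> fiberE B x \<and> chosen_chart B x e = v"
    using local_triv_bij_fiber(2)[OF chosen_triv(2)[OF assms] chosen_triv(1)[OF assms]] by blast
  then have "chart_inv B x v \<in> fiberE B x \<and> chosen_chart B x (chart_inv B x v) = v"
    unfolding chart_inv_def by (rule someI_ex)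
  then show "chart_inv B x v \<in> fiberE B x" "chosen_chart B x (chart_inv B x v) = v" by auto
qed

lemma chart_inv_chosen_chart:
  assumes "x \<in> topspace (bbase B)" "e \<in> fiberE B x"
  shows "chart_inv B x (chosen_chart B x e) = e"
  using inj_onD[OF local_triv_bij_fiber(1)[OF chosen_triv(2)[OF assms(1)] chosen_triv(1)[OF assms(1)]]]
    chart_inv[OF assms(1)] assms(2) by metis

lemma chart_inv_inj: "x \<in> topspace (bbase B) \<Longrightarrow> chart_inv B x v = chart_inv B x w \<Longrightarrow> v = w"
  by (metis chart_inv(2))

lemma chart_inv_hom:
  assumes x: "x \<in> topspace (bbase B)"
  shows "chart_inv B x (v + w) = badd B (chart_inv B x v) (chart_inv B x w)"
    and "chart_inv B x (c *s v) = bsmult B c (chart_inv B x v)"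
    and "chart_inv B x (tmul B v w) = bmul B (chart_inv B x v) (chart_inv B x w)"
    and "chart_inv B x 0 = bzero B x" "chart_inv B x (tone B) = bone B x"
proof -
  note A = local_triv_alg[OF chosen_triv(2)[OF x] chosen_triv(1)[OF x]]
  have inv: "chart_inv B x v \<in> fiberE B x" "chart_inv B x w \<in> fiberE B x"
    and chart: "chosen_chart B x (chart_inv B x v) = v" "chosen_chart B x (chart_inv B x w) = w"
    using chart_inv[OF x] by auto
  show "chart_inv B x (v + w) = badd B (chart_inv B x v) (chart_inv B x w)"
    using A(5)[OF inv] chart chart_inv_chosen_chart[OF x, of "badd B (chart_inv B x v) (chart_inv B x w)"]
    by simp
  show "chart_inv B x (c *s v) = bsmult B c (chart_inv B x v)"
    using A(6)[OF inv(1)] chart chart_inv_chosen_chart[OF x, of "bsmult B c (chart_inv B x v)"] by simp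
  show "chart_inv B x (tmul B v w) = bmul B (chart_inv B x v) (chart_inv B x w)"
    using A(7)[OF inv] chart chart_inv_chosen_chart[OF x, of "bmul B (chart_inv B x v) (chart_inv B x w)"]
    by simp
  show "chart_inv B x 0 = bzero B x" using A(1,2) chart_inv_chosen_chart[OF x, of "bzero B x"] by simp
  show "chart_inv B x (tone B) = bone B x" using A(3,4) chart_inv_chosen_chart[OF x, of "bone B x"] by simp
qed

lemma chart_transition:
  assumes "local_triv B W \<phi>" "x \<in> W"
  shows "\<phi> (chart_inv B x (v + w)) = \<phi> (chart_inv B x v) + \<phi> (chart_inv B x w)"
    and "\<phi> (chart_inv B x (c *s v)) = c *s \<phi> (chart_inv B x v)"
    and "\<phi> (chart_inv B x (tmul B v w)) = tmul B (\<phi> (chart_inv B x v)) (\<phi> (chart_inv B x w))"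
    and "inj (\<lambda>v. \<phi> (chart_inv B x v))"
proof -
  have x: "x \<in> topspace (bbase B)" using local_triv_subset[OF assms(1)] assms(2) by auto
  note A = local_triv_alg[OF assms]
  have inv: "chart_inv B x v \<in> fiberE B x" for v using chart_inv(1)[OF x] .
  show "\<phi> (chart_inv B x (v + w)) = \<phi> (chart_inv B x v) + \<phi> (chart_inv B x w)"
    using A(5)[OF inv inv] by (simp add: chart_inv_hom[OF x])
  show "\<phi> (chart_inv B x (c *s v)) = c *s \<phi> (chart_inv B x v)"
    using A(6)[OF inv] by (simp add: chart_inv_hom[OF x])
  show "\<phi> (chart_inv B x (tmul B v w)) = tmul B (\<phi> (chart_inv B x v)) (\<phi> (chart_inv B x w))"
    using A(7)[OF inv inv] by (simp add: chart_inv_hom[OF x])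
  show "inj (\<lambda>v. \<phi> (chart_inv B x v))"
  proof (rule injI)
    fix v w assume "\<phi> (chart_inv B x v) = \<phi> (chart_inv B x w)"
    then have "chart_inv B x v = chart_inv B x w"
      using inj_onD[OF local_triv_bij_fiber(1)[OF assms]] inv by blast
    then show "v = w" by (rule chart_inv_inj[OF x])
  qed
qed

lemma fd_algebra_typical: "fd_algebra (tmul B) (tone B)"
  using loc_triv unfolding loc_triv_alg_bundle_def fd_algebra_def by blast

lemma fib_ideal_chart_inv_image:
  assumes x: "x \<in> topspace (bbase B)" and J: "fd_algebra.two_sided_ideal (tmul B) J"
  shows "fib_ideal B x (chart_inv B x ` J)"
  unfolding fib_ideal_def
proof (intro conjI ballI allI)
  note hom = chart_inv_hom[OF x]
  have J': "0 \<in> J" "\<And>a b. a \<in> J \<Longrightarrow> b \<in> J \<Longrightarrow> a + b \<in> J" "\<And>c a. a \<in> J \<Longrightarrow> c *s a \<in> J"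
    "\<And>s a. a \<in> J \<Longrightarrow> tmul B s a \<in> J \<and> tmul B a s \<in> J"
    using J by (auto simp: fd_algebra.two_sided_ideal_def[OF fd_algebra_typical])
  show "chart_inv B x ` J \<subseteq> fiberE B x" using chart_inv(1)[OF x] by auto
  show "bzero B x \<in> chart_inv B x ` J" using J'(1) hom(4) by (metis image_eqI)
  show "badd B a b \<in> chart_inv B x ` J" if "a \<in> chart_inv B x ` J" "b \<in> chart_inv B x ` J" for a b
    using that J'(2) by (auto simp flip: hom(1))
  show "bsmult B c a \<in> chart_inv B x ` J" if "a \<in> chart_inv B x ` J" for c a
    using that J'(3) by (auto simp flip: hom(2))
  fix s a assume s: "s \<in> fiberE B x" and "a \<in> chart_inv B x ` J"
  then obtain j where j: "j \<in> J" "a = chart_inv B x j" by auto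
  have "bmul B s a = chart_inv B x (tmul B (chosen_chart B x s) j)"
    and "bmul B a s = chart_inv B x (tmul B j (chosen_chart B x s))"
    by (simp_all add: j(2) hom(3) chart_inv_chosen_chart[OF x s])
  then show "bmul B s a \<in> chart_inv B x ` J" "bmul B a s \<in> chart_inv B x ` J"
    using J'(4) j(1) by auto
qed

lemma fib_nilpotent_chart_inv_image:
  assumes x: "x \<in> topspace (bbase B)" and J: "fd_algebra.nilpotent_subset (tmul B) (tone B) J"
  shows "fib_nilpotent B x (chart_inv B x ` J)"
proof -
  obtain k where k: "k \<ge> 1" "\<And>js. length js = k \<Longrightarrow> set js \<subseteq> J \<Longrightarrow> foldr (tmul B) js (tone B) = 0"
    using J by (auto simp: fd_algebra.nilpotent_subset_def[OF fd_algebra_typical])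
  have foldr_chart_inv: "foldr (bmul B) (map (chart_inv B x) js) (bone B x) = chart_inv B x (foldr (tmul B) js (tone B))"
    for js by (induction js) (simp_all add: chart_inv_hom[OF x])
  show ?thesis unfolding fib_nilpotent_def
  proof (intro exI[of _ k] conjI allI impI)
    fix as assume as: "length as = k \<and> set as \<subseteq> chart_inv B x ` J"
    define js where "js = map (chosen_chart B x) as"
    have "as = map (chart_inv B x) js"
      using as chart_inv(1)[OF x] by (auto simp: js_def chart_inv_chosen_chart[OF x] intro!: map_idI[symmetric])
    moreover have "set js \<subseteq> J" using as chart_inv(2)[OF x] by (auto simp: js_def)
    ultimately show "foldr (bmul B) as (bone B x) = bzero B x"
      using as k(2) foldr_chart_inv chart_inv_hom(4)[OF x] by simp
  qed (rule k(1))
qed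

lemma semisimple_typical:
  assumes x0: "x0 \<in> topspace (bbase B)"
  shows "fd_algebra.semisimple (tmul B) (tone B)"
  unfolding fd_algebra.semisimple_def[OF fd_algebra_typical]
proof (intro allI impI)
  fix J assume "fd_algebra.two_sided_ideal (tmul B) J \<and> fd_algebra.nilpotent_subset (tmul B) (tone B) J"
  then have "chart_inv B x0 ` J = {bzero B x0}"
    using semisimple_fibers x0 fib_ideal_chart_inv_image fib_nilpotent_chart_inv_image
    unfolding semisimple_fibers_def by blast
  show "J \<subseteq> {0}"
  proof
    fix j assume "j \<in> J"
    then have "chart_inv B x0 j = chart_inv B x0 0"
      using \<open>chart_inv B x0 ` J = {bzero B x0}\<close> chart_inv_hom(4)[OF x0] by (metis imageI singletonD)
    then show "j \<in> {0}" using chart_inv_inj[OF x0] by blast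
  qed
qed

lemma semisimple_algebra_typical:
  "x0 \<in> topspace (bbase B) \<Longrightarrow> semisimple_algebra (tmul B) (tone B)"
  using fd_algebra_typical semisimple_typical by (simp add: semisimple_algebra_def semisimple_algebra_axioms_def)

lemma chart_semilinear_fiber_hom_or_antihom:
  assumes x: "x \<in> topspace (bbase B)" and lt: "local_triv B W \<phi>" "y \<in> W"
    and h: "semilinear_fiber_hom_or_antihom cj B x y h"
  defines "g \<equiv> \<lambda>v. \<phi> (h (chart_inv B x v))"
  shows "g (v + w) = g v + g w" and "g (c *s v) = cj c *s g v" and "inj g"
    and "(\<forall>v w. g (tmul B v w) = tmul B (g v) (g w)) \<or> (\<forall>v w. g (tmul B v w) = tmul B (g w) (g v))"
proof -
  have into: "\<And>a. a \<in> fiberE B x \<Longrightarrow> h a \<in> fiberE B y" and inj: "inj_on h (fiberE B x)"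
    and add: "\<And>a b. a \<in> fiberE B x \<Longrightarrow> b \<in> fiberE B x \<Longrightarrow> h (badd B a b) = badd B (h a) (h b)"
    and scale: "\<And>c a. a \<in> fiberE B x \<Longrightarrow> h (bsmult B c a) = bsmult B (cj c) (h a)"
    and hom_or_antihom: "(\<forall>a\<in>fiberE B x. \<forall>b\<in>fiberE B x. h (bmul B a b) = bmul B (h a) (h b)) \<or>
      (\<forall>a\<in>fiberE B x. \<forall>b\<in>fiberE B x. h (bmul B a b) = bmul B (h b) (h a))"
    using h by (auto simp: semilinear_fiber_hom_or_antihom_def)
  note A = local_triv_alg[OF lt]
  have inv: "chart_inv B x v \<in> fiberE B x" for v using chart_inv(1)[OF x] .
  show "g (v + w) = g v + g w"
    using A(5)[OF into[OF inv] into[OF inv]] by (simp add: g_def chart_inv_hom[OF x] add[OF inv inv])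
  show "g (c *s v) = cj c *s g v"
    using A(6)[OF into[OF inv]] by (simp add: g_def chart_inv_hom[OF x] scale[OF inv])
  show "inj g"
  proof (rule injI)
    fix v w assume "g v = g w"
    then have "h (chart_inv B x v) = h (chart_inv B x w)"
      using inj_onD[OF local_triv_bij_fiber(1)[OF lt]] into inv by (simp add: g_def)
    then have "chart_inv B x v = chart_inv B x w" using inj_onD[OF inj] inv by blast
    then show "v = w" by (rule chart_inv_inj[OF x])
  qed
  show "(\<forall>v w. g (tmul B v w) = tmul B (g v) (g w)) \<or> (\<forall>v w. g (tmul B v w) = tmul B (g w) (g v))"
    using hom_or_antihom A(7)[OF into[OF inv] into[OF inv]] inv
    by (auto simp: g_def chart_inv_hom[OF x])
qed

text \<open>Every semilinear automorphism or anti-automorphism of the typical fibre preserves the trace form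
  up to the involution, hence fixes the Casimir matrix.\<close>
lemma tcoord_image_casimir_section:
  assumes x: "x \<in> topspace (bbase B)" and lt: "local_triv B W \<phi>" "y \<in> W"
    and cj: "field_involution cj" and h: "semilinear_fiber_hom_or_antihom cj B x y h"
  shows "tcoord \<phi> (map (\<lambda>(a, b). (h a, h b)) (casimir_section B x)) = semisimple_algebra.casimir (tmul B)"
proof -
  interpret S: semisimple_algebra "tmul B" "tone B" using x by (rule semisimple_algebra_typical)
  let ?g = "\<lambda>v. \<phi> (h (chart_inv B x v))"
  note g = chart_semilinear_fiber_hom_or_antihom[OF x lt h]
  have "tcoord \<phi> (map (\<lambda>(a, b). (h a, h b)) (casimir_section B x)) =
      matrix ?g ** map_matrix cj S.casimir ** transpose (matrix ?g)"
    unfolding casimir_section_def by (rule tcoord_map_matrix_tensor) (rule g(2))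
  also have "\<dots> = S.casimir"
    using S.casimir_congruence[of cj ?g, OF cj g(1-3) S.tform_semilinear_image[of cj ?g, OF cj g(1-3) g(4)]] .
  finally show ?thesis .
qed

lemma tcoord_casimir_section:
  assumes "local_triv B W \<phi>" "x \<in> W"
  shows "tcoord \<phi> (casimir_section B x) = semisimple_algebra.casimir (tmul B)"
proof -
  have x: "x \<in> topspace (bbase B)" using local_triv_subset[OF assms(1)] assms(2) by auto
  show ?thesis
    using tcoord_image_casimir_section[OF x assms field_involution_id, of "\<lambda>a. a"]
    by (simp add: semilinear_fiber_hom_or_antihom_def)
qed

lemma linear_chart_transition:
  assumes "local_triv B W \<phi>" "x \<in> W"
  shows "Vector_Spaces.linear (*s) (*s) (\<lambda>v. \<phi> (chart_inv B x v))"
  by (rule vec_linearI) (simp_all add: chart_transition[OF assms])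

lemma casimir_section_commutes:
  assumes x: "x \<in> topspace (bbase B)" and c: "c \<in> fiberE B x"
  shows "teq B x (map (\<lambda>(a, b). (bmul B c a, b)) (casimir_section B x))
                 (map (\<lambda>(a, b). (a, bmul B b c)) (casimir_section B x))"
  unfolding teq_def
proof (intro allI impI, elim conjE)
  fix W \<phi> assume lt: "local_triv B W \<phi>" and xW: "x \<in> W"
  interpret S: semisimple_algebra "tmul B" "tone B" using x by (rule semisimple_algebra_typical)
  note A = local_triv_alg[OF lt xW]
  have inv: "chart_inv B x v \<in> fiberE B x" for v using chart_inv(1)[OF x] .
  let ?A = "matrix (\<lambda>v. \<phi> (chart_inv B x v))" and ?y = "\<phi> c"
  have "(\<lambda>v. \<phi> (bmul B c (chart_inv B x v))) = tmul B ?y \<circ> (\<lambda>v. \<phi> (chart_inv B x v))"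
    using A(7)[OF c inv] by (auto simp: fun_eq_iff)
  then have left: "matrix (\<lambda>v. \<phi> (bmul B c (chart_inv B x v))) = S.lmat ?y ** ?A"
    unfolding S.lmat_def by (simp add: matrix_compose_gen[OF linear_chart_transition[OF lt xW] S.linear_left_mult])
  have "(\<lambda>v. \<phi> (bmul B (chart_inv B x v) c)) = (\<lambda>v. tmul B v ?y) \<circ> (\<lambda>v. \<phi> (chart_inv B x v))"
    using A(7)[OF inv c] by (auto simp: fun_eq_iff)
  then have right: "matrix (\<lambda>v. \<phi> (bmul B (chart_inv B x v) c)) = S.rmat ?y ** ?A"
    unfolding S.rmat_def by (simp add: matrix_compose_gen[OF linear_chart_transition[OF lt xW] S.linear_right_mult])
  have scale_left: "\<phi> (bmul B c (chart_inv B x (s *s v))) = s *s \<phi> (bmul B c (chart_inv B x v))" for s v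
    using A(7)[OF c inv] chart_transition(2)[OF lt xW] by (simp add: S.mult_scale_right)
  have invariant: "?A ** S.casimir ** transpose ?A = S.casimir"
    using tcoord_map_matrix_tensor[of \<phi> "\<lambda>a. a" B x "\<lambda>c. c" "\<lambda>a. a" S.casimir]
      tcoord_casimir_section[OF lt xW] chart_transition(2)[OF lt xW]
    by (simp add: casimir_section_def)
  have "tcoord \<phi> (map (\<lambda>(a, b). (bmul B c a, (\<lambda>a. a) b)) (casimir_section B x)) =
      S.lmat ?y ** (?A ** S.casimir ** transpose ?A)"
    unfolding casimir_section_def
    by (subst tcoord_map_matrix_tensor[where cj = "\<lambda>c. c"]) (simp_all add: scale_left left matrix_mul_assoc)
  also have "\<dots> = (?A ** S.casimir ** transpose ?A) ** transpose (S.rmat ?y)"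
    by (simp only: invariant S.lmat_casimir)
  also have "\<dots> = tcoord \<phi> (map (\<lambda>(a, b). ((\<lambda>a. a) a, bmul B b c)) (casimir_section B x))"
    unfolding casimir_section_def
    by (subst tcoord_map_matrix_tensor[where cj = "\<lambda>c. c"])
      (simp_all add: chart_transition(2)[OF lt xW] right matrix_transpose_mul matrix_mul_assoc)
  finally show "tcoord \<phi> (map (\<lambda>(a, b). (bmul B c a, b)) (casimir_section B x)) =
      tcoord \<phi> (map (\<lambda>(a, b). (a, bmul B b c)) (casimir_section B x))" by simp
qed

lemma fsum_in_fiber:
  assumes x: "x \<in> topspace (bbase B)" and "set l \<subseteq> fiberE B x"
  shows "fsum B x l \<in> fiberE B x \<and> chosen_chart B x (fsum B x l) = sum_list (map (chosen_chart B x) l)"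
  using assms(2)
proof (induction l)
  case Nil
  then show ?case using local_triv_alg(1,2)[OF chosen_triv(2)[OF x] chosen_triv(1)[OF x]] by (simp add: fsum_def)
next
  case (Cons a l)
  then show ?case
    using local_triv_alg(5)[OF chosen_triv(2)[OF x] chosen_triv(1)[OF x], of a "fsum B x l"]
    by (simp add: fsum_def)
qed

lemma casimir_section_product:
  assumes x: "x \<in> topspace (bbase B)"
  shows "fsum B x (map (\<lambda>(a, b). bmul B a b) (casimir_section B x)) = bone B x"
proof -
  interpret S: semisimple_algebra "tmul B" "tone B" using x by (rule semisimple_algebra_typical)
  let ?l = "map (\<lambda>(a, b). bmul B a b) (casimir_section B x)"
  note A = local_triv_alg[OF chosen_triv(2)[OF x] chosen_triv(1)[OF x]]
  have inv: "chart_inv B x v \<in> fiberE B x" "chosen_chart B x (chart_inv B x v) = v" for v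
    using chart_inv[OF x] by auto
  have "set ?l \<subseteq> fiberE B x"
    unfolding casimir_section_def matrix_tensor_def using A(7)[OF inv(1) inv(1)] by auto
  note sum = fsum_in_fiber[OF x this]
  have "chosen_chart B x (fsum B x ?l) = sum_list (map (chosen_chart B x) ?l)" using sum by simp
  also have "\<dots> = (\<Sum>k\<in>UNIV. \<Sum>l\<in>UNIV. tmul B (S.casimir $ k $ l *s axis k 1) (axis l 1))"
    unfolding casimir_section_def matrix_tensor_def map_map using A(7)[OF inv(1) inv(1)] inv(2)
    by (simp add: o_def split_def sum_list_index_pairs)
  also have "\<dots> = tone B"
    using S.casimir_product_eq_one by (simp add: S.casimir_product_def S.mult_scale_left)
  finally show ?thesis
    using chart_inv_chosen_chart[OF x, of "fsum B x ?l"] sum chart_inv_hom(5)[OF x] by simp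
qed

lemma sep_idempotent_casimir_section:
  assumes "x \<in> topspace (bbase B)"
  shows "sep_idempotent B x (casimir_section B x)"
  unfolding sep_idempotent_def tensor_in_def
  using chart_inv(1)[OF assms] casimir_section_commutes[OF assms] casimir_section_product[OF assms]
  by (auto simp: casimir_section_def matrix_tensor_def)

lemma cont_casimir_section: "cont_tensor_section B (casimir_section B)"
  unfolding cont_tensor_section_def
proof (intro allI impI)
  fix W \<phi> assume lt: "local_triv B W \<phi>"
  have "continuous_map (subtopology (bbase B) W) euclidean (\<lambda>x. semisimple_algebra.casimir (tmul B))"
    by simp
  then show "continuous_map (subtopology (bbase B) W) euclidean (\<lambda>x. tcoord \<phi> (casimir_section B x))"
    by (rule continuous_map_eq) (use tcoord_casimir_section[OF lt] in auto)
qed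

lemma invariant_casimir_section:
  assumes grp: "topological_group G" and act: "bundle_action G B"
  shows "invariant_tensor_section G B (casimir_section B)"
  unfolding invariant_tensor_section_def teq_def
proof (intro ballI allI impI, elim conjE)
  fix g x W \<phi>
  assume g: "g \<in> topspace (gtop G)" and x: "x \<in> topspace (bbase B)"
    and lt: "local_triv B W \<phi>" and gx: "bactX B g x \<in> W"
  have into: "bactE B g a \<in> fiberE B (bactX B g x)" if "a \<in> fiberE B x" for a
    using act g x that unfolding bundle_action_def fiberE_def by auto
  have alg: "bactE B g (badd B a b) = badd B (bactE B g a) (bactE B g b)"
      "bactE B g (bsmult B c a) = bsmult B c (bactE B g a)"
      "bactE B g (bmul B a b) = bmul B (bactE B g a) (bactE B g b)"
    if "a \<in> fiberE B x" "b \<in> fiberE B x" for a b c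
    using act g x that unfolding bundle_action_def by blast+
  have inv_g: "ginv G g \<in> topspace (gtop G)" "gmul G (ginv G g) g = gone G"
    using grp g unfolding topological_group_def by auto
  have act_inverse: "bactE B (ginv G g) (bactE B g a) = a" if "a \<in> fiberE B x" for a
  proof -
    have a: "a \<in> topspace (btotal B)" using that by (simp add: fiberE_def)
    have "bactE B (gmul G (ginv G g) g) a = bactE B (ginv G g) (bactE B g a)"
      using act inv_g(1) g a unfolding bundle_action_def by blast
    moreover have "bactE B (gone G) a = a" using act a unfolding bundle_action_def by blast
    ultimately show ?thesis using inv_g(2) by simp
  qed
  have "inj_on (bactE B g) (fiberE B x)" using act_inverse by (rule inj_on_inverseI[of _ "bactE B (ginv G g)"])
  then have "tcoord \<phi> (map (\<lambda>(a, b). (bactE B g a, bactE B g b)) (casimir_section B x)) =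
      semisimple_algebra.casimir (tmul B)"
    using into alg
    by (intro tcoord_image_casimir_section[OF x lt gx field_involution_id])
      (simp add: semilinear_fiber_hom_or_antihom_def)
  then show "tcoord \<phi> (map (\<lambda>(a, b). (bactE B g a, bactE B g b)) (casimir_section B x)) =
      tcoord \<phi> (casimir_section B (bactX B g x))"
    using tcoord_casimir_section[OF lt gx] by simp
qed

lemma star_flip_casimir_section:
  assumes cj: "field_involution cj" and star: "star_bundle_U cj G B st"
  shows "star_flip_section B st (casimir_section B)"
  unfolding star_flip_section_def teq_def
proof (intro ballI allI impI, elim conjE)
  fix x W \<phi> assume x: "x \<in> topspace (bbase B)" and lt: "local_triv B W \<phi>" and xW: "x \<in> W"
  interpret S: semisimple_algebra "tmul B" "tone B" using x by (rule semisimple_algebra_typical)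
  have st: "st a \<in> fiberE B x" "st (st a) = a" "st (badd B a b) = badd B (st a) (st b)"
      "st (bsmult B c a) = bsmult B (cj c) (st a)" "st (bmul B a b) = bmul B (st b) (st a)"
    if "a \<in> fiberE B x" "b \<in> fiberE B x" for a b c
    using star x that unfolding star_bundle_U_def by blast+
  have "inj_on st (fiberE B x)" by (rule inj_on_inverseI[of _ st]) (use st in blast)
  then have "tcoord \<phi> (map (\<lambda>(a, b). (st a, st b)) (casimir_section B x)) = S.casimir"
    using st by (intro tcoord_image_casimir_section[OF x lt xW cj])
      (simp add: semilinear_fiber_hom_or_antihom_def)
  also have "\<dots> = tcoord \<phi> (map (\<lambda>(a, b). (b, a)) (casimir_section B x))"
    by (simp add: tcoord_flip tcoord_casimir_section[OF lt xW] S.transpose_casimir)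
  finally show "tcoord \<phi> (map (\<lambda>(a, b). (st a, st b)) (casimir_section B x)) =
      tcoord \<phi> (map (\<lambda>(a, b). (b, a)) (casimir_section B x))" .
qed

lemma sep_section_casimir_section:
  assumes "topological_group G" "bundle_action G B"
  shows "sep_section G B (casimir_section B)"
  unfolding sep_section_def
  using cont_casimir_section invariant_casimir_section[OF assms] sep_idempotent_casimir_section
  by blast

end

lemma casimir_section_properties:
  fixes G :: "'g tgroup" and B :: "('g, 'x, 'e, 'k::real_normed_field, 'n::finite) algbundle"
  assumes "compact_Lie_group G" "alg_bundle_U G B" "semisimple_fibers B"
  shows "sep_section G B (casimir_section B)"
    and "field_involution cj \<Longrightarrow> star_bundle_U cj G B st \<Longrightarrow> star_flip_section B st (casimir_section B)"
proof -
  interpret semisimple_alg_bundle B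
    using assms(2,3) by (simp add: semisimple_alg_bundle_def alg_bundle_U_def)
  show "sep_section G B (casimir_section B)"
    using assms(1,2) by (intro sep_section_casimir_section) (simp_all add: compact_Lie_group_def alg_bundle_U_def)
  show "field_involution cj \<Longrightarrow> star_bundle_U cj G B st \<Longrightarrow> star_flip_section B st (casimir_section B)"
    by (rule star_flip_casimir_section)
qed

theorem mainTheorem4:
  fixes GR :: "'g tgroup" and BR :: "('g, 'x, 'e, real, 'n::finite) algbundle" and stR :: "'e \<Rightarrow> 'e"
    and GC :: "'h tgroup" and BC :: "('h, 'y, 'f, complex, 'm::finite) algbundle" and stC :: "'f \<Rightarrow> 'f"
  shows
    "(compact_Lie_group GR \<and> Hausdorff_space (bbase BR) \<and> paracompact_space (bbase BR) \<and>
      alg_bundle_U GR BR \<and> semisimple_fibers BR \<longrightarrow>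
        (\<exists>e. sep_section GR BR e) \<and>
        (star_bundle_U (\<lambda>c. c) GR BR stR \<longrightarrow>
           (\<exists>e. sep_section GR BR e \<and> star_flip_section BR stR e)))
     \<and>
     (compact_Lie_group GC \<and> Hausdorff_space (bbase BC) \<and> paracompact_space (bbase BC) \<and>
      alg_bundle_U GC BC \<and> semisimple_fibers BC \<longrightarrow>
        (\<exists>e. sep_section GC BC e) \<and>
        (star_bundle_U cnj GC BC stC \<longrightarrow>
           (\<exists>e. sep_section GC BC e \<and> star_flip_section BC stC e)))"
  using casimir_section_properties[of GR BR] casimir_section_properties[of GC BC]
    field_involution_id field_involution_cnj
  by blast

end
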